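(* Let $\{M_p\mid p\in P\}$ be a Morse decomposition of a multivector field on a finite simplicial complex $K$, with associated $P$-filtered chain complex $(C,d)$, and let $f:K\to\mathbb R$ be Lyapunov for this Morse decomposition. Let $P_f$ and $P'_f$ be two $f$-compatible orders of $P$, and let $(\bar C,\bar d)$ and $(\bar C',\bar d')$ be Conley complexes of $(C,d)$. Then $\mathrm{pers}(H(\bar{\mathbf C},P_f))=\mathrm{pers}(H(\mathbf F,P_f))=\mathrm{pers}(H(\mathbf F',P'_f))=\mathrm{pers}(H(\bar{\mathbf C}',P'_f))$.
   Context: $K$ is a finite simplicial complex; a multivector field $\mathcal V$ on $K$ is a partition of $K$ into convex sets $V$ (if $\sigma,\tau\in V$ and $\sigma\le\mu\le\tau$ in the face order then $\mu\in V$); $F_{\mathcal V}(\sigma)=[\sigma]_{\mathcal V}\cup\{\tau:\tau\le\sigma\}$ where $[\sigma]_{\mathcal V}$ is the part containing $\sigma$; a path is a sequence $\sigma_1,\dots,\sigma_r$ with $\sigma_k\in F_{\mathcal V}(\sigma_{k-1})$. A Morse decomposition indexed by a finite poset $(P,\le_P)$ is a partition $K=\bigsqcup_{p\in P}M_p$ such that every path from $M_p$ to $M_q$ has $q\le_P p$. Let $m=|P|$. $(C,d)$: $C_p$ is the $\mathbb Z_2$-span of the simplices in $M_p$ (graded by dimension), $C=\bigoplus_pC_p$ the simplicial chains of $K$ over $\mathbb Z_2$, $d$ the simplicial boundary. For $P$-graded spaces and a linear map $h$, $h_{pq}=\pi_p h\iota_q$, and $h$ is $P$-filtered if $h_{pq}\ne0\Rightarrow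 p\le_P q$. A $P$-filtered chain complex is a $\mathbb Z_2$ chain complex with a $P$-gradation (compatible with degree) whose differential is $P$-filtered. Filtered chain maps are $P$-filtered chain maps; filtered chain maps $\varphi,\psi$ are filtered chain homotopic if $\psi-\varphi=d'S+Sd$ for some $P$-filtered degree-raising-by-one linear $S$; two $P$-filtered complexes are filtered chain homotopic if there are filtered chain maps $\varphi,\varphi'$ between them with $\varphi'\varphi$ and $\varphi\varphi'$ filtered chain homotopic to the identities. A Conley complex of $(C,d)$ is a $P$-filtered chain complex $(\bar C,\bar d)$ filtered chain homotopic to $(C,d)$ with $\bar d_{pp}=0$ for all $p$. $f:K\to\mathbb R$ is Lyapunov (for the Morse decomposition) if $f$ is constant on each $M_p$, with value denoted $f(p)$, and $p\le_P q$ implies $f(p)\le f(q)$. An $f$-compatible order $P_f$ is an enumeration $p_1,\dots,p_m$ of $P$ that is a linear extension of $\le_P$ with $f(p_1)\le\dots\le f(p_m)$. For a $P$-filtered chain complex $(D,\delta)$, set $\mathbf D_{p_i}=\bigoplus_{j\le i}D_{p_j}$ (a subcomplex) and let $H(\mathbf D,P_f)$ be the persistence module $H_*(\mathbf D_{p_1})\to\dots\to H_*(\mathbf D_{p_m})$ with inclusion-induced maps. $K_i=\bigsqcup_{j\le i}M_{p_j}$ is a subcomplex of $K$ and $H(\mathbf F,P_f)$ is $H_*(C(K_1))\to\dots\to H_*(C(K_m))$ with inclusion-induced maps, $C(K_i)$ the simplicial chains of $K_i$ over $\mathbb Z_2$; $\mathbf F'$, $\bar{\mathbf C}'$ denote the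 same constructions for $P'_f$ and $(\bar C',\bar d')$. For such a module $V_1\to\dots\to V_m$ indexed by $P_f$, $\mathrm{pers}$ is the persistence diagram: decompose each homological degree into interval modules $[a,b]$, $1\le a\le b\le m$, and record for each the point $(f(p_a),f(p_{b+1}))$ with $f(p_{m+1}):=+\infty$, discarding points with $f(p_a)=f(p_{b+1})$; the result is a multiset of points per degree. *)

theory Defs
  imports Main "HOL-Library.Multiset" "HOL-Library.Extended_Real"
begin

definition simplicial_complex :: "'v set set \<Rightarrow> bool" where
  "simplicial_complex K \<longleftrightarrow> finite K \<and>
     (\<forall>\<sigma>\<in>K. finite \<sigma> \<and> \<sigma> \<noteq> {}) \<and>
     (\<forall>\<sigma>\<in>K. \<forall>\<tau>. \<tau> \<subseteq> \<sigma> \<and> \<tau> \<noteq> {} \<longrightarrow> \<tau> \<in> K)"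

definition convex_in :: "'v set set \<Rightarrow> 'v set set \<Rightarrow> bool" where
  "convex_in K V \<longleftrightarrow> (\<forall>\<sigma>\<in>V. \<forall>\<tau>\<in>V. \<forall>\<mu>\<in>K. \<sigma> \<subseteq> \<mu> \<and> \<mu> \<subseteq> \<tau> \<longrightarrow> \<mu> \<in> V)"

definition multivector_field :: "'v set set \<Rightarrow> 'v set set set \<Rightarrow> bool" where
  "multivector_field K \<V> \<longleftrightarrow>
     (\<forall>V\<in>\<V>. V \<noteq> {} \<and> V \<subseteq> K \<and> convex_in K V) \<and>
     (\<forall>V\<in>\<V>. \<forall>W\<in>\<V>. V \<noteq> W \<longrightarrow> V \<inter> W = {}) \<and>
     \<Union>\<V> = K"

definition mvpart :: "'v set set set \<Rightarrow> 'v set \<Rightarrow> 'v set set" where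
  "mvpart \<V> \<sigma> = (THE V. V \<in> \<V> \<and> \<sigma> \<in> V)"

definition Fmv :: "'v set set \<Rightarrow> 'v set set set \<Rightarrow> 'v set \<Rightarrow> 'v set set" where
  "Fmv K \<V> \<sigma> = mvpart \<V> \<sigma> \<union> {\<tau>\<in>K. \<tau> \<subseteq> \<sigma>}"

definition mv_path :: "'v set set \<Rightarrow> 'v set set set \<Rightarrow> 'v set list \<Rightarrow> bool" where
  "mv_path K \<V> xs \<longleftrightarrow> xs \<noteq> [] \<and> set xs \<subseteq> K \<and>
     (\<forall>i. Suc i < length xs \<longrightarrow> xs ! Suc i \<in> Fmv K \<V> (xs ! i))"

definition partial_order_on_set :: "'p set \<Rightarrow> ('p \<Rightarrow> 'p \<Rightarrow> bool) \<Rightarrow> bool" where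
  "partial_order_on_set P le \<longleftrightarrow>
     (\<forall>p\<in>P. le p p) \<and>
     (\<forall>p\<in>P. \<forall>q\<in>P. le p q \<and> le q p \<longrightarrow> p = q) \<and>
     (\<forall>p\<in>P. \<forall>q\<in>P. \<forall>r\<in>P. le p q \<and> le q r \<longrightarrow> le p r)"

definition morse_decomposition ::
  "'v set set \<Rightarrow> 'v set set set \<Rightarrow> 'p set \<Rightarrow> ('p \<Rightarrow> 'p \<Rightarrow> bool) \<Rightarrow> ('p \<Rightarrow> 'v set set) \<Rightarrow> bool" where
  "morse_decomposition K \<V> P le M \<longleftrightarrow>
     finite P \<and> partial_order_on_set P le \<and>
     (\<forall>p\<in>P. M p \<subseteq> K) \<and>
     (\<forall>p\<in>P. \<forall>q\<in>P. p \<noteq> q \<longrightarrow> M p \<inter> M q = {}) \<and>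
     (\<Union>p\<in>P. M p) = K \<and>
     (\<forall>xs p q. mv_path K \<V> xs \<and> p \<in> P \<and> q \<in> P \<and> hd xs \<in> M p \<and> last xs \<in> M q \<longrightarrow> le q p)"

text \<open>A Z2-vector space is represented by a basis (set of generators); a vector is a
  finite set of generators (its support), addition is symmetric difference.  A linear map is
  given by the images of the generators.\<close>

record ('g, 'p) fcc =
  gens :: "'g set"
  deg  :: "'g \<Rightarrow> int"
  grd  :: "'g \<Rightarrow> 'p"
  bdry :: "'g \<Rightarrow> 'g set"

text \<open>Linear extension over Z2 of a map given on generators.\<close>
definition lin :: "('a \<Rightarrow> 'b set) \<Rightarrow> 'a set \<Rightarrow> 'b set" where
  "lin \<phi> c = {h. odd (card {g\<in>c. h \<in> \<phi> g})}"

definition sdiff :: "'a set \<Rightarrow> 'a set \<Rightarrow> 'a set" where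
  "sdiff A B = (A - B) \<union> (B - A)"

definition is_fcc :: "'p set \<Rightarrow> ('p \<Rightarrow> 'p \<Rightarrow> bool) \<Rightarrow> ('g, 'p, 'z) fcc_scheme \<Rightarrow> bool" where
  "is_fcc P le D \<longleftrightarrow>
     (\<forall>g\<in>gens D. grd D g \<in> P \<and> finite (bdry D g) \<and> bdry D g \<subseteq> gens D \<and>
        (\<forall>h\<in>bdry D g. deg D h = deg D g - 1 \<and> le (grd D h) (grd D g)) \<and>
        lin (bdry D) (bdry D g) = {})"

definition fmap :: "('p \<Rightarrow> 'p \<Rightarrow> bool) \<Rightarrow> int \<Rightarrow> ('g, 'p, 'z) fcc_scheme \<Rightarrow> ('h, 'p, 'y) fcc_scheme
                    \<Rightarrow> ('g \<Rightarrow> 'h set) \<Rightarrow> bool" where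
  "fmap le k D E \<phi> \<longleftrightarrow>
     (\<forall>g\<in>gens D. finite (\<phi> g) \<and> \<phi> g \<subseteq> gens E \<and>
        (\<forall>h\<in>\<phi> g. deg E h = deg D g + k \<and> le (grd E h) (grd D g)))"

definition fchain_map :: "('p \<Rightarrow> 'p \<Rightarrow> bool) \<Rightarrow> ('g, 'p, 'z) fcc_scheme \<Rightarrow> ('h, 'p, 'y) fcc_scheme
                    \<Rightarrow> ('g \<Rightarrow> 'h set) \<Rightarrow> bool" where
  "fchain_map le D E \<phi> \<longleftrightarrow> fmap le 0 D E \<phi> \<and>
     (\<forall>g\<in>gens D. lin (bdry E) (\<phi> g) = lin \<phi> (bdry D g))"

text \<open>Filtered chain homotopy: \<open>\<psi> - \<phi> = d' S + S d\<close> (over Z2, minus is symmetric difference).\<close>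
definition fhomotopic :: "('p \<Rightarrow> 'p \<Rightarrow> bool) \<Rightarrow> ('g, 'p, 'z) fcc_scheme \<Rightarrow> ('h, 'p, 'y) fcc_scheme
                    \<Rightarrow> ('g \<Rightarrow> 'h set) \<Rightarrow> ('g \<Rightarrow> 'h set) \<Rightarrow> bool" where
  "fhomotopic le D E \<phi> \<psi> \<longleftrightarrow> fchain_map le D E \<phi> \<and> fchain_map le D E \<psi> \<and>
     (\<exists>S. fmap le 1 D E S \<and>
        (\<forall>g\<in>gens D. sdiff (\<psi> g) (\<phi> g) = sdiff (lin (bdry E) (S g)) (lin S (bdry D g))))"

definition fhtpy_equivalent :: "('p \<Rightarrow> 'p \<Rightarrow> bool) \<Rightarrow> ('g, 'p, 'z) fcc_scheme \<Rightarrow> ('h, 'p, 'y) fcc_scheme \<Rightarrow> bool" where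
  "fhtpy_equivalent le D E \<longleftrightarrow>
     (\<exists>\<phi> \<phi>'. fchain_map le D E \<phi> \<and> fchain_map le E D \<phi>' \<and>
        fhomotopic le D D (\<lambda>g. lin \<phi>' (\<phi> g)) (\<lambda>g. {g}) \<and>
        fhomotopic le E E (\<lambda>h. lin \<phi> (\<phi>' h)) (\<lambda>h. {h}))"

definition morse_cc :: "'v set set \<Rightarrow> 'p set \<Rightarrow> ('p \<Rightarrow> 'v set set) \<Rightarrow> ('v set, 'p) fcc" where
  "morse_cc K P M = \<lparr> gens = K,
     deg = (\<lambda>\<sigma>. int (card \<sigma>) - 1),
     grd = (\<lambda>\<sigma>. THE p. p \<in> P \<and> \<sigma> \<in> M p),
     bdry = (\<lambda>\<sigma>. {\<tau>\<in>K. \<tau> \<subseteq> \<sigma> \<and> card \<tau> + 1 = card \<sigma>}) \<rparr>"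

definition conley_complex :: "'p set \<Rightarrow> ('p \<Rightarrow> 'p \<Rightarrow> bool) \<Rightarrow> ('v set, 'p) fcc \<Rightarrow> ('g, 'p) fcc \<Rightarrow> bool" where
  "conley_complex P le C D \<longleftrightarrow> is_fcc P le D \<and> fhtpy_equivalent le D C \<and>
     (\<forall>g\<in>gens D. \<forall>h\<in>bdry D g. grd D h \<noteq> grd D g)"

definition lyapunov ::
  "'p set \<Rightarrow> ('p \<Rightarrow> 'p \<Rightarrow> bool) \<Rightarrow> ('p \<Rightarrow> 'v set set) \<Rightarrow> ('v set \<Rightarrow> real) \<Rightarrow> ('p \<Rightarrow> real) \<Rightarrow> bool" where
  "lyapunov P le M f fP \<longleftrightarrow>
     (\<forall>p\<in>P. \<forall>\<sigma>\<in>M p. f \<sigma> = fP p) \<and>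
     (\<forall>p\<in>P. \<forall>q\<in>P. le p q \<longrightarrow> fP p \<le> fP q)"

definition compatible_order :: "'p set \<Rightarrow> ('p \<Rightarrow> 'p \<Rightarrow> bool) \<Rightarrow> ('p \<Rightarrow> real) \<Rightarrow> 'p list \<Rightarrow> bool" where
  "compatible_order P le fP ps \<longleftrightarrow> distinct ps \<and> set ps = P \<and>
     (\<forall>i<length ps. \<forall>j<length ps. le (ps ! i) (ps ! j) \<longrightarrow> i \<le> j) \<and>
     sorted (map fP ps)"

definition chains :: "('g, 'p, 'z) fcc_scheme \<Rightarrow> 'g set \<Rightarrow> int \<Rightarrow> 'g set set" where
  "chains D A n = {c. finite c \<and> c \<subseteq> A \<and> (\<forall>g\<in>c. deg D g = n)}"

definition cycles :: "('g, 'p, 'z) fcc_scheme \<Rightarrow> 'g set \<Rightarrow> int \<Rightarrow> 'g set set" where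
  "cycles D A n = {c\<in>chains D A n. lin (bdry D) c = {}}"

definition boundaries :: "('g, 'p, 'z) fcc_scheme \<Rightarrow> 'g set \<Rightarrow> int \<Rightarrow> 'g set set" where
  "boundaries D A n = lin (bdry D) ` chains D A (n + 1)"

definition zsum :: "'g set set \<Rightarrow> 'g set" where
  "zsum S = lin (\<lambda>s. s) S"

text \<open>Dimension of the quotient \<open>U / (U \<inter> W)\<close>: maximal size of a subset of \<open>U\<close>
  that is linearly independent modulo \<open>W\<close>.\<close>
definition indep_mod :: "'g set set \<Rightarrow> 'g set set \<Rightarrow> 'g set set \<Rightarrow> bool" where
  "indep_mod U W S \<longleftrightarrow> finite S \<and> S \<subseteq> U \<and> (\<forall>T\<subseteq>S. T \<noteq> {} \<longrightarrow> zsum T \<notin> W)"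

definition qdim :: "'g set set \<Rightarrow> 'g set set \<Rightarrow> nat" where
  "qdim U W = Sup {card S | S. indep_mod U W S}"

text \<open>Rank of \<open>H_n(A) \<rightarrow> H_n(B)\<close> induced by inclusion of subcomplexes spanned by \<open>A \<subseteq> B\<close>:
  the image is \<open>Z_n(A) / (Z_n(A) \<inter> B_n(B))\<close>.\<close>
definition prank :: "('g, 'p, 'z) fcc_scheme \<Rightarrow> 'g set \<Rightarrow> 'g set \<Rightarrow> int \<Rightarrow> nat" where
  "prank D A B n = qdim (cycles D A n) (boundaries D B n)"

text \<open>Persistence diagram (in degree \<open>n\<close>) of the module
  \<open>H_n(filt 1) \<rightarrow> \<dots> \<rightarrow> H_n(filt m)\<close>, stage \<open>i\<close> having value \<open>val i\<close>, \<open>val (m+1) = \<infinity>\<close>.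
  The multiplicity of the interval \<open>[a,b]\<close> is obtained from the rank invariant by
  inclusion-exclusion.\<close>
definition pers_module ::
  "('g, 'p, 'z) fcc_scheme \<Rightarrow> (nat \<Rightarrow> 'g set) \<Rightarrow> nat \<Rightarrow> (nat \<Rightarrow> ereal) \<Rightarrow> int \<Rightarrow> (ereal \<times> ereal) multiset" where
  "pers_module D filt m val n =
     (let r = (\<lambda>i j. if i = 0 \<or> m < j then (0::int) else int (prank D (filt i) (filt j) n));
          mu = (\<lambda>a b. r a b - r (a - 1) b - r a (b + 1) + r (a - 1) (b + 1))
      in \<Sum>(a, b)\<in>{(a, b). 1 \<le> a \<and> a \<le> b \<and> b \<le> m}.
           if val a = val (b + 1) then {#} else replicate_mset (nat (mu a b)) (val a, val (b + 1)))"

definition order_val :: "('p \<Rightarrow> real) \<Rightarrow> 'p list \<Rightarrow> nat \<Rightarrow> ereal" where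
  "order_val fP ps i = (if 1 \<le> i \<and> i \<le> length ps then ereal (fP (ps ! (i - 1))) else \<infinity>)"

text \<open>\<open>pers(H(\<^bold>D, P_f))\<close> for a P-filtered chain complex \<open>D\<close>: stage \<open>i\<close> is spanned by the
  generators of grades \<open>p_1, \<dots>, p_i\<close>.\<close>
definition pers_filtered :: "('g, 'p, 'z) fcc_scheme \<Rightarrow> ('p \<Rightarrow> real) \<Rightarrow> 'p list \<Rightarrow> int \<Rightarrow> (ereal \<times> ereal) multiset" where
  "pers_filtered D fP ps =
     pers_module D (\<lambda>i. {g\<in>gens D. grd D g \<in> set (take i ps)}) (length ps) (order_val fP ps)"

text \<open>\<open>pers(H(\<^bold>F, P_f))\<close>: simplicial homology of the subcomplexes
  \<open>K_i = M_{p_1} \<union> \<dots> \<union> M_{p_i}\<close>.\<close>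
definition simplicial_cc :: "'v set set \<Rightarrow> ('v set, unit) fcc" where
  "simplicial_cc K = \<lparr> gens = K, deg = (\<lambda>\<sigma>. int (card \<sigma>) - 1), grd = (\<lambda>_. ()),
     bdry = (\<lambda>\<sigma>. {\<tau>\<in>K. \<tau> \<subseteq> \<sigma> \<and> card \<tau> + 1 = card \<sigma>}) \<rparr>"

definition pers_F :: "'v set set \<Rightarrow> ('p \<Rightarrow> 'v set set) \<Rightarrow> ('p \<Rightarrow> real) \<Rightarrow> 'p list \<Rightarrow> int \<Rightarrow> (ereal \<times> ereal) multiset" where
  "pers_F K M fP ps =
     pers_module (simplicial_cc K) (\<lambda>i. \<Union>j<i. M (ps ! j)) (length ps) (order_val fP ps)"

end

theory Submission
  imports Defs
begin

(*
  A persistence diagram is computed from its rank invariant r i j, the rank of the map from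
  the homology of stage i to that of stage j, by inclusion-exclusion.  A filtered chain
  homotopy equivalence maps cycles of a stage to cycles of the same stage and reflects
  boundaries, so it preserves every r i j; hence a Conley complex and the simplicial
  filtration K_1, ..., K_m have the same diagram.  The stages of two f-compatible orders can
  differ only at a stage i whose successor has the same value of f.  The multiplicity of a
  point (x, y) telescopes to four ranks, taken at the last stages with value below x, at most
  x, below y and at most y; these stages are sublevel sets of f, hence common to both orders.
  The telescoping needs nonnegative multiplicities, which is the inequality
  dim Z1/W1 + dim Z2/W2 <= dim Z2/W1 + dim Z1/W2 for subspaces Z1 of Z2 and W1 of W2,
  where dim Z/W is the dimension of Z modulo W.
*)

section \<open>Linear algebra over Z2 on finite sets\<close>

lemma sdiff_empty [simp]: "sdiff a {} = a" "sdiff {} a = a"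
  by (auto simp: sdiff_def)

lemma sdiff_self [simp]: "sdiff a a = {}"
  by (auto simp: sdiff_def)

lemma sdiff_eq_empty_iff [simp]: "sdiff a b = {} \<longleftrightarrow> a = b"
  by (auto simp: sdiff_def)

lemma sdiff_cancel [simp]: "sdiff (sdiff a b) b = a" "sdiff a (sdiff a b) = b"
  by (auto simp: sdiff_def)

lemma sdiff_cancel_common [simp]: "sdiff (sdiff a c) (sdiff b c) = sdiff a b"
  by (auto simp: sdiff_def)

lemma sdiff_swap_middle: "sdiff (sdiff a b) (sdiff c d) = sdiff (sdiff a c) (sdiff b d)"
  by (auto simp: sdiff_def)

lemma sdiff_subset_Un: "sdiff a b \<subseteq> a \<union> b"
  by (auto simp: sdiff_def)

lemma finite_sdiff: "finite a \<Longrightarrow> finite b \<Longrightarrow> finite (sdiff a b)"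
  by (simp add: sdiff_def)

lemma odd_card_sdiff:
  assumes "finite A" "finite B"
  shows "odd (card (sdiff A B)) \<longleftrightarrow> odd (card A) \<noteq> odd (card B)"
proof -
  have "card (sdiff A B) = card (A - B) + card (B - A)"
    unfolding sdiff_def using assms by (intro card_Un_disjoint) auto
  moreover have "card A = card (A - B) + card (A \<inter> B)" "card B = card (B - A) + card (A \<inter> B)"
    using assms card_Diff_subset_Int[of A B] card_Diff_subset_Int[of B A]
    by (simp_all add: Int_commute card_mono)
  ultimately show ?thesis by presburger
qed

lemma lin_empty [simp]: "lin \<phi> {} = {}"
  by (simp add: lin_def)

lemma lin_singleton [simp]: "lin \<phi> {x} = \<phi> x"
proof -
  have "{g \<in> {x}. h \<in> \<phi> g} = (if h \<in> \<phi> x then {x} else {})" for h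
    by auto
  then show ?thesis
    by (auto simp: lin_def)
qed

lemma lin_sdiff:
  assumes "finite a" "finite b"
  shows "lin \<phi> (sdiff a b) = sdiff (lin \<phi> a) (lin \<phi> b)"
proof -
  have "{g \<in> sdiff a b. h \<in> \<phi> g} = sdiff {g \<in> a. h \<in> \<phi> g} {g \<in> b. h \<in> \<phi> g}" for h
    by (auto simp: sdiff_def)
  then have "h \<in> lin \<phi> (sdiff a b) \<longleftrightarrow> h \<in> sdiff (lin \<phi> a) (lin \<phi> b)" for h
    using assms odd_card_sdiff[of "{g \<in> a. h \<in> \<phi> g}" "{g \<in> b. h \<in> \<phi> g}"]
    by (simp add: lin_def) (auto simp: sdiff_def)
  then show ?thesis
    by blast
qed

lemma lin_insert:
  assumes "finite c" "x \<notin> c"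
  shows "lin \<phi> (insert x c) = sdiff (\<phi> x) (lin \<phi> c)"
proof -
  have "insert x c = sdiff {x} c"
    using assms(2) by (auto simp: sdiff_def)
  then show ?thesis
    using assms(1) by (simp add: lin_sdiff)
qed

lemma lin_subset_UN: "lin \<phi> c \<subseteq> (\<Union>g\<in>c. \<phi> g)"
proof
  fix h
  assume "h \<in> lin \<phi> c"
  then have "card {g \<in> c. h \<in> \<phi> g} \<noteq> 0"
    by (auto simp: lin_def dest: odd_pos)
  then have "{g \<in> c. h \<in> \<phi> g} \<noteq> {}"
    by (metis card.empty)
  then show "h \<in> (\<Union>g\<in>c. \<phi> g)"
    by blast
qed

lemma finite_lin: "finite c \<Longrightarrow> (\<And>g. g \<in> c \<Longrightarrow> finite (\<phi> g)) \<Longrightarrow> finite (lin \<phi> c)"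
  using lin_subset_UN by (metis finite_UN_I finite_subset)

lemma lin_cong:
  assumes "\<And>g. g \<in> c \<Longrightarrow> \<phi> g = \<psi> g"
  shows "lin \<phi> c = lin \<psi> c"
proof -
  have "{g \<in> c. h \<in> \<phi> g} = {g \<in> c. h \<in> \<psi> g}" for h
    using assms by auto
  then show ?thesis
    by (simp add: lin_def)
qed

lemma lin_singletons [simp]: "lin (\<lambda>g. {g}) c = c"
proof -
  have "{g \<in> c. h \<in> {g}} = (if h \<in> c then {h} else {})" for h
    by auto
  then show ?thesis
    by (auto simp: lin_def)
qed

lemma lin_sdiff_map:
  assumes "finite c"
  shows "lin (\<lambda>g. sdiff (\<phi> g) (\<psi> g)) c = sdiff (lin \<phi> c) (lin \<psi> c)"
  using assms by (induction c rule: finite_induct) (simp_all add: lin_insert sdiff_swap_middle)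

lemma lin_lin:
  assumes "finite c" "\<And>g. g \<in> c \<Longrightarrow> finite (\<psi> g)"
  shows "lin \<phi> (lin \<psi> c) = lin (\<lambda>g. lin \<phi> (\<psi> g)) c"
  using assms by (induction c rule: finite_induct) (simp_all add: lin_insert lin_sdiff finite_lin)

lemma zsum_empty [simp]: "zsum {} = {}"
  by (simp add: zsum_def)

lemma zsum_singleton [simp]: "zsum {x} = x"
  by (simp add: zsum_def)

lemma zsum_insert: "finite T \<Longrightarrow> x \<notin> T \<Longrightarrow> zsum (insert x T) = sdiff x (zsum T)"
  by (simp add: zsum_def lin_insert)

lemma zsum_sdiff: "finite T \<Longrightarrow> finite T' \<Longrightarrow> zsum (sdiff T T') = sdiff (zsum T) (zsum T')"
  by (simp add: zsum_def lin_sdiff)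

lemma zsum_singletons:
  assumes "finite c"
  shows "zsum ((\<lambda>g. {g}) ` c) = c"
  using assms
proof (induction c rule: finite_induct)
  case (insert x F)
  then have "{x} \<notin> (\<lambda>g. {g}) ` F"
    by auto
  with insert show ?case
    by (simp add: zsum_insert sdiff_def)
qed simp

lemma zsum_image_linear:
  assumes "finite T" "\<And>t. t \<in> T \<Longrightarrow> finite t" "inj_on L T" "L {} = {}"
    and linear: "\<And>a b. finite a \<Longrightarrow> finite b \<Longrightarrow> L (sdiff a b) = sdiff (L a) (L b)"
  shows "L (zsum T) = zsum (L ` T)"
  using assms(1-3)
proof (induction T rule: finite_induct)
  case (insert x F)
  then have "finite (zsum F)" "L x \<notin> L ` F"
    by (auto simp: zsum_def finite_lin)
  with insert show ?case
    by (simp add: zsum_insert linear)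
qed (simp add: assms(4))

definition z2_subspace :: "'a set set \<Rightarrow> bool" where
  "z2_subspace U \<longleftrightarrow> {} \<in> U \<and> (\<forall>a\<in>U. \<forall>b\<in>U. sdiff a b \<in> U) \<and> (\<forall>a\<in>U. finite a)"

lemma z2_subspace_empty: "z2_subspace U \<Longrightarrow> {} \<in> U"
  by (simp add: z2_subspace_def)

lemma z2_subspace_sdiff: "z2_subspace U \<Longrightarrow> a \<in> U \<Longrightarrow> b \<in> U \<Longrightarrow> sdiff a b \<in> U"
  by (simp add: z2_subspace_def)

lemma z2_subspace_finite: "z2_subspace U \<Longrightarrow> a \<in> U \<Longrightarrow> finite a"
  by (simp add: z2_subspace_def)

lemma z2_subspace_Int: "z2_subspace U \<Longrightarrow> z2_subspace W \<Longrightarrow> z2_subspace (U \<inter> W)"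
  by (auto simp: z2_subspace_def)

lemma z2_subspace_finite_sets: "z2_subspace {c. finite c}"
  by (simp add: z2_subspace_def finite_sdiff)

lemma zsum_in_z2_subspace:
  assumes "z2_subspace U" "finite T" "T \<subseteq> U"
  shows "zsum T \<in> U"
  using assms(2,3)
  by (induction T rule: finite_induct)
    (simp_all add: zsum_insert z2_subspace_empty[OF assms(1)] z2_subspace_sdiff[OF assms(1)])

definition spans_mod :: "'a set set \<Rightarrow> 'a set set \<Rightarrow> 'a set set \<Rightarrow> bool" where
  "spans_mod U W S \<longleftrightarrow> (\<forall>u\<in>U. \<exists>T\<subseteq>S. sdiff u (zsum T) \<in> W)"

lemma indep_modD:
  "indep_mod U W S \<Longrightarrow> T \<subseteq> S \<Longrightarrow> zsum T \<in> W \<Longrightarrow> T = {}"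
  by (auto simp: indep_mod_def)

lemma indep_mod_empty [simp]: "indep_mod U W {}"
  by (simp add: indep_mod_def)

lemma indep_mod_insert:
  assumes W: "{} \<in> W" and S: "indep_mod U W S" and u: "u \<in> U"
    and not_spanned: "\<not> (\<exists>T\<subseteq>S. sdiff u (zsum T) \<in> W)"
  shows "u \<notin> S" "indep_mod U W (insert u S)"
proof -
  show "u \<notin> S"
    using not_spanned W by (metis empty_subsetI insert_subset sdiff_self zsum_singleton)
  have "zsum T \<notin> W" if T: "T \<subseteq> insert u S" "T \<noteq> {}" for T
  proof (cases "u \<in> T")
    case True
    have "finite (T - {u})"
      using S T(1) by (auto simp: indep_mod_def intro: finite_subset)
    then have "zsum T = sdiff u (zsum (T - {u}))"
      using True by (metis insert_Diff Diff_iff insertI1 zsum_insert)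
    moreover have "T - {u} \<subseteq> S"
      using T(1) by blast
    ultimately show ?thesis
      using not_spanned by auto
  next
    case False
    then show ?thesis
      using S T indep_modD by blast
  qed
  then show "indep_mod U W (insert u S)"
    using S u by (auto simp: indep_mod_def)
qed

lemma card_le_of_inj_on_Pow:
  assumes "finite R" "finite S" "inj_on f (Pow R)" "f ` Pow R \<subseteq> Pow S"
  shows "card R \<le> card S"
proof -
  have "card (Pow R) \<le> card (Pow S)"
    using assms(2-4) by (simp add: card_inj_on_le)
  then show ?thesis
    using assms(1,2) by (simp add: card_Pow)
qed

lemma indep_mod_zsum_inj:
  assumes W: "z2_subspace W" and R: "indep_mod U W R" and T: "T1 \<subseteq> R" "T2 \<subseteq> R"
    and "sdiff (zsum T1) (zsum T2) \<in> W"
  shows "T1 = T2"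
proof -
  have "finite T1" "finite T2"
    using T R by (auto simp: indep_mod_def intro: rev_finite_subset)
  then have "zsum (sdiff T1 T2) \<in> W"
    using assms(5) by (simp add: zsum_sdiff)
  moreover have "sdiff T1 T2 \<subseteq> R"
    using T sdiff_subset_Un[of T1 T2] by blast
  ultimately have "sdiff T1 T2 = {}"
    using indep_modD[OF R] by blast
  then show ?thesis
    by simp
qed

lemma card_indep_le_card_spanning:
  assumes U: "z2_subspace U" and W: "z2_subspace W" and R: "indep_mod U W R"
    and span: "spans_mod U W S" "finite S"
  shows "card R \<le> card S"
proof -
  have R': "finite R" "R \<subseteq> U"
    using R by (auto simp: indep_mod_def)
  have "\<forall>T\<in>Pow R. \<exists>T'. T' \<subseteq> S \<and> sdiff (zsum T) (zsum T') \<in> W"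
  proof
    fix T
    assume "T \<in> Pow R"
    then have "finite T" "T \<subseteq> U"
      using R' by (auto intro: rev_finite_subset)
    then have "zsum T \<in> U"
      by (rule zsum_in_z2_subspace[OF U])
    then show "\<exists>T'. T' \<subseteq> S \<and> sdiff (zsum T) (zsum T') \<in> W"
      using span(1) by (auto simp: spans_mod_def)
  qed
  then have "\<exists>f. \<forall>T\<in>Pow R. f T \<subseteq> S \<and> sdiff (zsum T) (zsum (f T)) \<in> W"
    by (rule bchoice)
  then obtain f where f: "\<forall>T\<in>Pow R. f T \<subseteq> S \<and> sdiff (zsum T) (zsum (f T)) \<in> W"
    by blast
  have "inj_on f (Pow R)"
  proof
    fix T1 T2
    assume T: "T1 \<in> Pow R" "T2 \<in> Pow R" "f T1 = f T2"
    have "sdiff (zsum T1) (zsum (f T1)) \<in> W"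
      using f T(1) by blast
    moreover have "sdiff (zsum T2) (zsum (f T1)) \<in> W"
      unfolding T(3) using f T(2) by blast
    ultimately have "sdiff (sdiff (zsum T1) (zsum (f T1))) (sdiff (zsum T2) (zsum (f T1))) \<in> W"
      by (rule z2_subspace_sdiff[OF W])
    then have "sdiff (zsum T1) (zsum T2) \<in> W"
      by simp
    then show "T1 = T2"
      using T(1,2) by (intro indep_mod_zsum_inj[OF W R]) auto
  qed
  moreover have "f ` Pow R \<subseteq> Pow S"
    using f by auto
  ultimately show ?thesis
    by (rule card_le_of_inj_on_Pow[OF R'(1) span(2)])
qed

lemma card_indep_mod_le_ambient:
  assumes U: "z2_subspace U" and W: "z2_subspace W" and S: "indep_mod U W S"
    and A: "finite A" "\<Union>U \<subseteq> A"
  shows "card S \<le> card A"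
proof -
  have "spans_mod U W ((\<lambda>g. {g}) ` A)"
    unfolding spans_mod_def
  proof
    fix u
    assume "u \<in> U"
    then have "(\<lambda>g. {g}) ` u \<subseteq> (\<lambda>g. {g}) ` A" "zsum ((\<lambda>g. {g}) ` u) = u"
      using A(2) z2_subspace_finite[OF U] by (auto simp: zsum_singletons)
    then show "\<exists>T\<subseteq>(\<lambda>g. {g}) ` A. sdiff u (zsum T) \<in> W"
      using z2_subspace_empty[OF W] by (intro exI[of _ "(\<lambda>g. {g}) ` u"]) simp
  qed
  then have "card S \<le> card ((\<lambda>g. {g}) ` A)"
    using card_indep_le_card_spanning[OF U W S] A(1) by blast
  then show ?thesis
    by (simp add: card_image)
qed

lemma ex_basis_mod:
  assumes U: "z2_subspace U" and W: "z2_subspace W" and A: "finite A" "\<Union>U \<subseteq> A"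
  obtains B where "indep_mod U W B" "spans_mod U W B"
proof -
  have "\<exists>B. indep_mod U W B \<and> (\<forall>S. indep_mod U W S \<longrightarrow> card S \<le> card B)"
    by (rule Lattices_Big.ex_has_greatest_nat[where k="{}" and b="Suc (card A)"])
      (use card_indep_mod_le_ambient[OF U W _ A] in \<open>auto simp: less_Suc_eq_le\<close>)
  then obtain B where B: "indep_mod U W B" and maximal: "\<And>S. indep_mod U W S \<Longrightarrow> card S \<le> card B"
    by blast
  have "spans_mod U W B"
    unfolding spans_mod_def
  proof (rule ballI, rule ccontr)
    fix u
    assume "u \<in> U" "\<not> (\<exists>T\<subseteq>B. sdiff u (zsum T) \<in> W)"
    with indep_mod_insert[OF z2_subspace_empty[OF W] B] have
      "u \<notin> B" "indep_mod U W (insert u B)"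
      by blast+
    moreover have "finite B"
      using B by (simp add: indep_mod_def)
    ultimately show False
      using maximal[of "insert u B"] by simp
  qed
  then show ?thesis
    using B that by blast
qed

lemma card_le_qdim:
  assumes bound: "\<And>S. indep_mod U W S \<Longrightarrow> card S \<le> N" and S: "indep_mod U W S"
  shows "card S \<le> qdim U W"
proof -
  have "bdd_above {card S | S. indep_mod U W S}"
    by (rule bdd_aboveI[of _ N]) (auto simp: bound)
  then show ?thesis
    unfolding qdim_def using S by (auto intro: cSup_upper)
qed

lemma qdim_le:
  assumes "\<And>S. indep_mod U W S \<Longrightarrow> card S \<le> k"
  shows "qdim U W \<le> k"
  unfolding qdim_def
proof (rule cSup_least)
  show "{card S | S. indep_mod U W S} \<noteq> {}"
    using indep_mod_empty by blast
  show "x \<le> k" if "x \<in> {card S | S. indep_mod U W S}" for x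
    using that assms by blast
qed

lemma qdim_eq_card_basis:
  assumes "z2_subspace U" "z2_subspace W" "indep_mod U W V" "spans_mod U W V"
  shows "qdim U W = card V"
proof -
  have "finite V"
    using assms(3) by (simp add: indep_mod_def)
  then have bound: "card S \<le> card V" if "indep_mod U W S" for S
    using card_indep_le_card_spanning assms that by blast
  have "qdim U W \<le> card V"
    by (intro qdim_le bound)
  moreover have "card V \<le> qdim U W"
    by (intro card_le_qdim[where N = "card V"] bound assms(3))
  ultimately show ?thesis
    by simp
qed

lemma qdim_eq_0:
  assumes "U \<subseteq> W"
  shows "qdim U W = 0"
proof -
  have "S = {}" if S: "indep_mod U W S" for S
  proof -
    have "s \<notin> S" for s
    proof
      assume "s \<in> S"
      then have "{s} \<subseteq> S" "zsum {s} \<in> W"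
        using S assms by (auto simp: indep_mod_def)
      then show False
        using indep_modD[OF S] by blast
    qed
    then show ?thesis
      by blast
  qed
  then show ?thesis
    using qdim_le[of U W 0] by fastforce
qed

lemma qdim_le_of_indep_transfer:
  assumes transfer: "\<And>S. indep_mod U W S \<Longrightarrow> \<exists>S'. indep_mod U' W' S' \<and> card S' = card S"
    and bound: "\<And>S. indep_mod U' W' S \<Longrightarrow> card S \<le> N"
  shows "qdim U W \<le> qdim U' W'"
proof (rule qdim_le)
  fix S
  assume "indep_mod U W S"
  then obtain S' where "indep_mod U' W' S'" "card S' = card S"
    using transfer by blast
  then show "card S \<le> qdim U' W'"
    using card_le_qdim[where U = U' and W = W' and N = N and S = S', OF bound] by simp
qed

lemma spans_mod_Un:
  assumes Z: "z2_subspace Z" and Y: "spans_mod Z W' Y" "finite Y" "Y \<subseteq> Z"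
    and X: "spans_mod (Z \<inter> W') W X" "finite X"
  shows "spans_mod Z W (X \<union> Y)"
  unfolding spans_mod_def
proof
  fix u
  assume u: "u \<in> Z"
  obtain TY where TY: "TY \<subseteq> Y" "sdiff u (zsum TY) \<in> W'"
    using Y(1) u by (auto simp: spans_mod_def)
  have "finite TY"
    using finite_subset[OF TY(1) Y(2)] .
  then have "zsum TY \<in> Z"
    using zsum_in_z2_subspace[OF Z] TY(1) Y(3) by blast
  then have "sdiff u (zsum TY) \<in> Z \<inter> W'"
    using z2_subspace_sdiff[OF Z u] TY(2) by blast
  then obtain TX where TX: "TX \<subseteq> X" "sdiff (sdiff u (zsum TY)) (zsum TX) \<in> W"
    using X(1) by (auto simp: spans_mod_def)
  have "zsum (sdiff TX TY) = sdiff (zsum TX) (zsum TY)"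
    using zsum_sdiff finite_subset[OF TX(1) X(2)] \<open>finite TY\<close> by blast
  moreover have "sdiff u (sdiff (zsum TX) (zsum TY)) = sdiff (sdiff u (zsum TY)) (zsum TX)"
    by (auto simp: sdiff_def)
  ultimately have "sdiff u (zsum (sdiff TX TY)) \<in> W"
    using TX(2) by simp
  moreover have "sdiff TX TY \<subseteq> X \<union> Y"
    using TX(1) TY(1) sdiff_subset_Un[of TX TY] by blast
  ultimately show "\<exists>T\<subseteq>X \<union> Y. sdiff u (zsum T) \<in> W"
    by blast
qed

lemma indep_mod_Un:
  assumes W': "z2_subspace W'" "W \<subseteq> W'"
    and X: "indep_mod U W X" "X \<subseteq> W'" and V: "indep_mod U' W' V" and "U \<subseteq> U'"
  shows "indep_mod U' W (X \<union> V)" "X \<inter> V = {}"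
proof -
  have fin: "finite X" "finite V"
    using X(1) V by (auto simp: indep_mod_def)
  have "T = {}" if T: "T \<subseteq> X \<union> V" "zsum T \<in> W" for T
  proof -
    have fin_T: "finite (T \<inter> X)" "finite (T - X)"
      using fin finite_subset[of "T - X" V] T(1) by auto
    have "sdiff (T \<inter> X) (T - X) = T"
      by (auto simp: sdiff_def)
    then have split: "zsum T = sdiff (zsum (T \<inter> X)) (zsum (T - X))"
      using zsum_sdiff[OF fin_T] by simp
    have "zsum (T \<inter> X) \<in> W'"
      using zsum_in_z2_subspace[OF W'(1) fin_T(1)] X(2) by blast
    moreover have "zsum T \<in> W'"
      using T(2) W'(2) by blast
    ultimately have "sdiff (zsum (T \<inter> X)) (zsum T) \<in> W'"
      by (rule z2_subspace_sdiff[OF W'(1)])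
    then have "zsum (T - X) \<in> W'"
      by (simp add: split)
    then have "T - X = {}"
      using indep_modD[OF V] T(1) by blast
    then show "T = {}"
      using indep_modD[OF X(1)] T(2) by blast
  qed
  then show "indep_mod U' W (X \<union> V)"
    using X(1) V fin \<open>U \<subseteq> U'\<close> by (auto simp: indep_mod_def)
  show "X \<inter> V = {}"
  proof (rule ccontr)
    assume "X \<inter> V \<noteq> {}"
    then obtain v where "v \<in> X" "v \<in> V"
      by blast
    then show False
      using X(2) indep_modD[OF V, of "{v}"] by auto
  qed
qed

lemma qdim_rectangle_ineq:
  assumes Z: "z2_subspace Z1" "z2_subspace Z2" "Z1 \<subseteq> Z2"
    and W: "z2_subspace W1" "z2_subspace W2" "W1 \<subseteq> W2"
    and A: "finite A" "\<Union>Z2 \<subseteq> A"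
  shows "qdim Z1 W1 + qdim Z2 W2 \<le> qdim Z2 W1 + qdim Z1 W2"
proof -
  \<comment> \<open>With bases Y of Z1 mod W2, X of (Z1 \<inter> W2) mod W1 and V of Z2 mod W2, the set
    X \<union> Y spans Z1 mod W1 while X \<union> V is independent in Z2 mod W1.\<close>
  have ZW: "z2_subspace (Z1 \<inter> W2)" "\<Union>Z1 \<subseteq> A" "\<Union>(Z1 \<inter> W2) \<subseteq> A"
    using z2_subspace_Int[OF Z(1) W(2)] Z(3) A(2) by auto
  obtain Y where Y: "indep_mod Z1 W2 Y" "spans_mod Z1 W2 Y"
    using ex_basis_mod[OF Z(1) W(2) A(1) ZW(2)] .
  obtain X where X: "indep_mod (Z1 \<inter> W2) W1 X" "spans_mod (Z1 \<inter> W2) W1 X"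
    using ex_basis_mod[OF ZW(1) W(1) A(1) ZW(3)] .
  obtain V where V: "indep_mod Z2 W2 V" "spans_mod Z2 W2 V"
    using ex_basis_mod[OF Z(2) W(2) A] .
  have fin: "finite X" "finite Y" "finite V" "Y \<subseteq> Z1" "X \<subseteq> W2"
    using X(1) Y(1) V(1) by (auto simp: indep_mod_def)
  have "spans_mod Z1 W1 (X \<union> Y)"
    by (rule spans_mod_Un[OF Z(1) Y(2) fin(2,4) X(2) fin(1)])
  then have "qdim Z1 W1 \<le> card (X \<union> Y)"
    using card_indep_le_card_spanning[OF Z(1) W(1)] fin(1,2) by (intro qdim_le) simp
  then have q11: "qdim Z1 W1 \<le> card X + card Y"
    using card_Un_le[of X Y] by linarith
  have XV: "indep_mod Z2 W1 (X \<union> V)" "X \<inter> V = {}"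
    using indep_mod_Un[OF W(2,3) X(1) fin(5) V(1)] Z(3) by auto
  have "card (X \<union> V) \<le> qdim Z2 W1"
    by (rule card_le_qdim[OF card_indep_mod_le_ambient[OF Z(2) W(1) _ A] XV(1)])
  moreover have "card (X \<union> V) = card X + card V"
    by (rule card_Un_disjoint[OF fin(1,3) XV(2)])
  moreover have "qdim Z1 W2 = card Y"
    by (rule qdim_eq_card_basis[OF Z(1) W(2) Y])
  moreover have "qdim Z2 W2 = card V"
    by (rule qdim_eq_card_basis[OF Z(2) W(2) V])
  ultimately show ?thesis
    using q11 by linarith
qed

lemma inj_on_indep_mod:
  assumes U: "z2_subspace U" and W': "{} \<in> W'"
    and L: "\<forall>a b. finite a \<longrightarrow> finite b \<longrightarrow> L (sdiff a b) = sdiff (L a) (L b)"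
    and reflects: "\<forall>u\<in>U. L u \<in> W' \<longrightarrow> u \<in> W" and S: "indep_mod U W S"
  shows "inj_on L S"
proof
  fix s1 s2
  assume s: "s1 \<in> S" "s2 \<in> S" "L s1 = L s2"
  have S': "S \<subseteq> U" "\<And>s. s \<in> S \<Longrightarrow> finite s"
    using S U z2_subspace_finite by (auto simp: indep_mod_def)
  then have "L (zsum {s1, s2}) \<in> W'" if "s1 \<noteq> s2"
    using that s L W' by (simp add: zsum_insert)
  moreover have "zsum {s1, s2} \<in> U"
    using s S'(1) U by (auto intro: zsum_in_z2_subspace)
  ultimately show "s1 = s2"
    using reflects s(1,2) indep_modD[OF S, of "{s1, s2}"] by blast
qed

lemma indep_mod_image:
  assumes U: "z2_subspace U" and W': "{} \<in> W'"
    and L: "L {} = {}" "\<forall>a b. finite a \<longrightarrow> finite b \<longrightarrow> L (sdiff a b) = sdiff (L a) (L b)"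
    and maps: "\<forall>u\<in>U. L u \<in> U'" and reflects: "\<forall>u\<in>U. L u \<in> W' \<longrightarrow> u \<in> W"
    and S: "indep_mod U W S"
  shows "indep_mod U' W' (L ` S)" "card (L ` S) = card S"
proof -
  have S': "finite S" "S \<subseteq> U"
    using S by (auto simp: indep_mod_def)
  have fin: "\<And>s. s \<in> S \<Longrightarrow> finite s"
    using S'(2) U z2_subspace_finite by blast
  have "inj_on L S"
    by (rule inj_on_indep_mod[OF U W' L(2) reflects S])
  then show "card (L ` S) = card S"
    by (rule card_image)
  have "zsum (L ` T) \<notin> W'" if T: "T \<subseteq> S" "T \<noteq> {}" for T
  proof -
    have "finite T"
      using T(1) S'(1) by (rule finite_subset)
    moreover have "inj_on L T"
      using \<open>inj_on L S\<close> T(1) by (rule inj_on_subset)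
    ultimately have "zsum (L ` T) = L (zsum T)"
      using zsum_image_linear[of T L] T(1) fin L by blast
    moreover have "zsum T \<in> U"
      using zsum_in_z2_subspace[OF U \<open>finite T\<close>] T(1) S'(2) by blast
    moreover have "zsum T \<notin> W"
      using indep_modD[OF S T(1)] T(2) by blast
    ultimately show ?thesis
      using reflects by metis
  qed
  then show "indep_mod U' W' (L ` S)"
    using S' maps by (auto simp: indep_mod_def subset_image_iff)
qed

section \<open>Ranks in filtered chain complexes\<close>

definition stage :: "('g, 'p, 'z) fcc_scheme \<Rightarrow> 'p list \<Rightarrow> nat \<Rightarrow> 'g set" where
  "stage D ps i = {g \<in> gens D. grd D g \<in> set (take i ps)}"

definition linear_extension :: "('p \<Rightarrow> 'p \<Rightarrow> bool) \<Rightarrow> 'p list \<Rightarrow> bool" where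
  "linear_extension le ps \<longleftrightarrow> (\<forall>i<length ps. \<forall>j<length ps. le (ps ! i) (ps ! j) \<longrightarrow> i \<le> j)"

definition filtered_over :: "'p list \<Rightarrow> ('g, 'p, 'z) fcc_scheme \<Rightarrow> bool" where
  "filtered_over ps D \<longleftrightarrow> (\<forall>g\<in>gens D. finite (bdry D g) \<and> grd D g \<in> set ps)"

lemma filtered_overD:
  "filtered_over ps D \<Longrightarrow> g \<in> gens D \<Longrightarrow> finite (bdry D g)"
  "filtered_over ps D \<Longrightarrow> g \<in> gens D \<Longrightarrow> grd D g \<in> set ps"
  by (simp_all add: filtered_over_def)

lemma stage_subset_gens: "stage D ps i \<subseteq> gens D"
  by (auto simp: stage_def)

lemma stage_mono: "i \<le> j \<Longrightarrow> stage D ps i \<subseteq> stage D ps j"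
  using set_take_subset_set_take by (fastforce simp: stage_def)

lemma fmap_stage:
  assumes \<phi>: "fmap le k D E \<phi>" and E: "filtered_over ps E" and ext: "linear_extension le ps"
    and g: "g \<in> stage D ps i"
  shows "\<phi> g \<subseteq> stage E ps i"
proof
  fix h
  assume h: "h \<in> \<phi> g"
  have g': "g \<in> gens D" "grd D g \<in> set (take i ps)"
    using g by (auto simp: stage_def)
  then have h': "h \<in> gens E" "le (grd E h) (grd D g)"
    using \<phi> h by (auto simp: fmap_def)
  obtain l where l: "l < i" "l < length ps" "ps ! l = grd D g"
    using g'(2) by (auto simp: in_set_conv_nth)
  obtain k where k: "k < length ps" "ps ! k = grd E h"
    using filtered_overD(2)[OF E h'(1)] by (auto simp: in_set_conv_nth)
  have "k < i"
    using ext k l h'(2) unfolding linear_extension_def by (metis order.strict_trans1)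
  then have "grd E h \<in> set (take i ps)"
    using k by (metis in_set_conv_nth length_take min_less_iff_conj nth_take)
  then show "h \<in> stage E ps i"
    using h' by (simp add: stage_def)
qed

lemma chains_mono: "A \<subseteq> B \<Longrightarrow> chains D A n \<subseteq> chains D B n"
  by (auto simp: chains_def)

lemma cycles_mono: "A \<subseteq> B \<Longrightarrow> cycles D A n \<subseteq> cycles D B n"
  by (auto simp: cycles_def chains_def)

lemma boundaries_mono: "A \<subseteq> B \<Longrightarrow> boundaries D A n \<subseteq> boundaries D B n"
  using chains_mono by (fastforce simp: boundaries_def)

lemma z2_subspace_chains: "z2_subspace (chains D A n)"
  by (auto simp: z2_subspace_def chains_def finite_sdiff sdiff_def)

lemma z2_subspace_cycles: "z2_subspace (cycles D A n)"
  using z2_subspace_chains[of D A n]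
  by (auto simp: z2_subspace_def cycles_def chains_def lin_sdiff)

lemma empty_in_boundaries: "{} \<in> boundaries D A n"
  unfolding boundaries_def by (rule image_eqI[of _ _ "{}"]) (simp_all add: chains_def)

lemma z2_subspace_boundaries:
  assumes "\<forall>g\<in>A. finite (bdry D g)"
  shows "z2_subspace (boundaries D A n)"
  unfolding z2_subspace_def
proof (intro conjI ballI)
  show "{} \<in> boundaries D A n"
    by (rule empty_in_boundaries)
  fix a b
  assume "a \<in> boundaries D A n" "b \<in> boundaries D A n"
  then obtain c c' where c: "c \<in> chains D A (n + 1)" "c' \<in> chains D A (n + 1)"
    and ab: "a = lin (bdry D) c" "b = lin (bdry D) c'"
    by (auto simp: boundaries_def)
  then have "sdiff a b = lin (bdry D) (sdiff c c')"
    by (simp add: lin_sdiff chains_def)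
  then show "sdiff a b \<in> boundaries D A n"
    using z2_subspace_sdiff[OF z2_subspace_chains c] by (simp add: boundaries_def)
  show "finite a"
    using c(1) ab(1) assms by (auto simp: chains_def intro!: finite_lin)
qed

lemma z2_subspace_boundaries_stage:
  "filtered_over ps D \<Longrightarrow> z2_subspace (boundaries D (stage D ps i) n)"
  using stage_subset_gens[of D ps i] by (auto simp: filtered_over_def intro!: z2_subspace_boundaries)

lemma lin_fmap_chains:
  assumes \<phi>: "fmap le k D E \<phi>" and E: "filtered_over ps E" and ext: "linear_extension le ps"
    and c: "c \<in> chains D (stage D ps i) n"
  shows "lin \<phi> c \<in> chains E (stage E ps i) (n + k)"
proof -
  have c': "finite c" "c \<subseteq> stage D ps i" "\<And>g. g \<in> c \<Longrightarrow> deg D g = n"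
    using c by (auto simp: chains_def)
  have \<phi>g: "finite (\<phi> g)" "\<And>h. h \<in> \<phi> g \<Longrightarrow> deg E h = n + k" if g: "g \<in> c" for g
  proof -
    have "g \<in> gens D"
      using c'(2) stage_subset_gens[of D ps i] g by blast
    then show "finite (\<phi> g)" "\<And>h. h \<in> \<phi> g \<Longrightarrow> deg E h = n + k"
      using \<phi> c'(3)[OF g] by (auto simp: fmap_def)
  qed
  have "lin \<phi> c \<subseteq> stage E ps i"
    using lin_subset_UN[of \<phi> c] fmap_stage[OF \<phi> E ext] c'(2) by blast
  moreover have "finite (lin \<phi> c)"
    using finite_lin[OF c'(1)] \<phi>g(1) by blast
  moreover have "deg E h = n + k" if "h \<in> lin \<phi> c" for h
    using lin_subset_UN[of \<phi> c] that \<phi>g(2) by blast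
  ultimately show ?thesis
    by (simp add: chains_def)
qed

lemma lin_fchain_map_chains:
  assumes "fchain_map le D E \<phi>" "filtered_over ps E" "linear_extension le ps"
    and "c \<in> chains D (stage D ps i) n"
  shows "lin \<phi> c \<in> chains E (stage E ps i) n"
proof -
  have "fmap le 0 D E \<phi>"
    using assms(1) by (simp add: fchain_map_def)
  then have "lin \<phi> c \<in> chains E (stage E ps i) (n + 0)"
    by (rule lin_fmap_chains[OF _ assms(2-4)])
  then show ?thesis
    by simp
qed

lemma lin_bdry_chain_map:
  assumes \<phi>: "fchain_map le D E \<phi>" and bdry: "\<forall>g\<in>gens D. finite (bdry D g)"
    and c: "finite c" "c \<subseteq> gens D"
  shows "lin (bdry E) (lin \<phi> c) = lin \<phi> (lin (bdry D) c)"
proof -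
  have "lin (bdry E) (lin \<phi> c) = lin (\<lambda>g. lin (bdry E) (\<phi> g)) c"
    using \<phi> c by (intro lin_lin) (auto simp: fchain_map_def fmap_def)
  also have "\<dots> = lin (\<lambda>g. lin \<phi> (bdry D g)) c"
    using \<phi> c by (intro lin_cong) (auto simp: fchain_map_def)
  also have "\<dots> = lin \<phi> (lin (bdry D) c)"
    using bdry c by (intro lin_lin[symmetric]) auto
  finally show ?thesis .
qed

lemma lin_chain_homotopy:
  assumes S: "fmap le 1 D E S" and bdry: "\<forall>g\<in>gens D. finite (bdry D g)"
    and htpy: "\<forall>g\<in>gens D. sdiff (\<psi> g) (\<phi> g) = sdiff (lin (bdry E) (S g)) (lin S (bdry D g))"
    and c: "finite c" "c \<subseteq> gens D"
  shows "sdiff (lin \<psi> c) (lin \<phi> c) = sdiff (lin (bdry E) (lin S c)) (lin S (lin (bdry D) c))"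
proof -
  have "sdiff (lin \<psi> c) (lin \<phi> c) = lin (\<lambda>g. sdiff (\<psi> g) (\<phi> g)) c"
    by (rule lin_sdiff_map[symmetric, OF c(1)])
  also have "\<dots> = lin (\<lambda>g. sdiff (lin (bdry E) (S g)) (lin S (bdry D g))) c"
    using c(2) htpy by (intro lin_cong) blast
  also have "\<dots> = sdiff (lin (\<lambda>g. lin (bdry E) (S g)) c) (lin (\<lambda>g. lin S (bdry D g)) c)"
    by (rule lin_sdiff_map[OF c(1)])
  also have "\<dots> = sdiff (lin (bdry E) (lin S c)) (lin S (lin (bdry D) c))"
  proof -
    have "lin (bdry E) (lin S c) = lin (\<lambda>g. lin (bdry E) (S g)) c"
      using S c(2) by (intro lin_lin[OF c(1)]) (auto simp: fmap_def)
    moreover have "lin S (lin (bdry D) c) = lin (\<lambda>g. lin S (bdry D g)) c"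
      using bdry c(2) by (intro lin_lin[OF c(1)]) blast
    ultimately show ?thesis
      by simp
  qed
  finally show ?thesis .
qed

lemma fhomotopic_id_cycle:
  assumes htpy: "fhomotopic le D D \<chi> (\<lambda>g. {g})" and bdry: "\<forall>g\<in>gens D. finite (bdry D g)"
    and u: "finite u" "u \<subseteq> gens D" "lin (bdry D) u = {}"
  obtains S where "fmap le 1 D D S" "sdiff u (lin \<chi> u) = lin (bdry D) (lin S u)"
proof -
  obtain S where S: "fmap le 1 D D S"
    and S_htpy: "\<forall>g\<in>gens D. sdiff {g} (\<chi> g) = sdiff (lin (bdry D) (S g)) (lin S (bdry D g))"
    using htpy by (auto simp: fhomotopic_def)
  have "sdiff (lin (\<lambda>g. {g}) u) (lin \<chi> u) = sdiff (lin (bdry D) (lin S u)) (lin S (lin (bdry D) u))"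
    by (rule lin_chain_homotopy[OF S bdry S_htpy u(1,2)])
  then have "sdiff u (lin \<chi> u) = lin (bdry D) (lin S u)"
    using u(3) by simp
  with S show ?thesis
    by (rule that)
qed

lemma chain_map_cycles:
  assumes \<phi>: "fchain_map le D E \<phi>" and D: "filtered_over ps D" and E: "filtered_over ps E"
    and ext: "linear_extension le ps" and u: "u \<in> cycles D (stage D ps i) n"
  shows "lin \<phi> u \<in> cycles E (stage E ps i) n"
proof -
  have u': "finite u" "u \<subseteq> stage D ps i" "lin (bdry D) u = {}" "u \<in> chains D (stage D ps i) n"
    using u by (auto simp: cycles_def chains_def)
  have "lin \<phi> u \<in> chains E (stage E ps i) n"
    by (rule lin_fchain_map_chains[OF \<phi> E ext u'(4)])
  moreover have "lin (bdry E) (lin \<phi> u) = lin \<phi> (lin (bdry D) u)"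
    using D by (intro lin_bdry_chain_map[OF \<phi> _ u'(1) order_trans[OF u'(2) stage_subset_gens]])
      (simp add: filtered_over_def)
  ultimately show ?thesis
    using u'(3) by (simp add: cycles_def)
qed

lemma homotopy_equivalence_reflects_boundaries:
  assumes \<phi>: "fchain_map le D E \<phi>" and \<psi>: "fchain_map le E D \<psi>"
    and htpy: "fhomotopic le D D (\<lambda>g. lin \<psi> (\<phi> g)) (\<lambda>g. {g})"
    and D: "filtered_over ps D" and E: "filtered_over ps E" and ext: "linear_extension le ps"
    and "i \<le> j" and u: "u \<in> cycles D (stage D ps i) n"
    and \<phi>u: "lin \<phi> u \<in> boundaries E (stage E ps j) n"
  shows "u \<in> boundaries D (stage D ps j) n"
proof -
  have bdry_D: "\<forall>g\<in>gens D. finite (bdry D g)" and bdry_E: "\<forall>h\<in>gens E. finite (bdry E h)"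
    using D E by (simp_all add: filtered_over_def)
  obtain c where c: "c \<in> chains E (stage E ps j) (n + 1)" "lin \<phi> u = lin (bdry E) c"
    using \<phi>u by (auto simp: boundaries_def)
  have u_i: "finite u" "u \<subseteq> stage D ps i" "lin (bdry D) u = {}" "u \<in> chains D (stage D ps i) n"
    using u by (auto simp: cycles_def chains_def)
  have u_gens: "u \<subseteq> gens D"
    using order_trans[OF u_i(2) stage_subset_gens] .
  obtain S where S: "fmap le 1 D D S"
    and S_u: "sdiff u (lin (\<lambda>g. lin \<psi> (\<phi> g)) u) = lin (bdry D) (lin S u)"
    by (rule fhomotopic_id_cycle[OF htpy bdry_D u_i(1) u_gens u_i(3)])
  have u_j: "u \<in> chains D (stage D ps j) n"
    using chains_mono[OF stage_mono[OF \<open>i \<le> j\<close>]] u_i(4) by blast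
  have c': "finite c" "c \<subseteq> gens E"
    using c(1) stage_subset_gens[of E ps j] by (auto simp: chains_def)
  have "lin \<psi> (lin \<phi> u) = lin (\<lambda>g. lin \<psi> (\<phi> g)) u"
    using \<phi> u_gens by (intro lin_lin[OF u_i(1)]) (auto simp: fchain_map_def fmap_def)
  then have "sdiff u (lin \<psi> (lin \<phi> u)) = lin (bdry D) (lin S u)"
    using S_u by simp
  moreover have "lin \<psi> (lin \<phi> u) = lin (bdry D) (lin \<psi> c)"
    using c(2) lin_bdry_chain_map[OF \<psi> bdry_E c'] by simp
  \<comment> \<open>Since u is a cycle, u = \<psi> (\<phi> u) + d (S u), and \<psi> (\<phi> u) = \<psi> (d c) = d (\<psi> c).\<close>
  ultimately have htpy_u: "sdiff u (lin (bdry D) (lin \<psi> c)) = lin (bdry D) (lin S u)"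
    by simp
  have \<psi>c: "lin \<psi> c \<in> chains D (stage D ps j) (n + 1)"
    by (rule lin_fchain_map_chains[OF \<psi> D ext c(1)])
  have Su: "lin S u \<in> chains D (stage D ps j) (n + 1)"
    by (rule lin_fmap_chains[OF S D ext u_j])
  have "u = sdiff (sdiff u (lin (bdry D) (lin \<psi> c))) (lin (bdry D) (lin \<psi> c))"
    by simp
  also have "\<dots> = sdiff (lin (bdry D) (lin S u)) (lin (bdry D) (lin \<psi> c))"
    by (simp only: htpy_u)
  also have "\<dots> = lin (bdry D) (sdiff (lin S u) (lin \<psi> c))"
    using \<psi>c Su by (simp add: chains_def lin_sdiff)
  finally show ?thesis
    using z2_subspace_sdiff[OF z2_subspace_chains Su \<psi>c] by (auto simp: boundaries_def)
qed

lemma indep_mod_homotopy_equivalence_image: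
  assumes \<phi>: "fchain_map le D E \<phi>" and \<psi>: "fchain_map le E D \<psi>"
    and htpy: "fhomotopic le D D (\<lambda>g. lin \<psi> (\<phi> g)) (\<lambda>g. {g})"
    and D: "filtered_over ps D" and E: "filtered_over ps E" and ext: "linear_extension le ps"
    and "i \<le> j" and S: "indep_mod (cycles D (stage D ps i) n) (boundaries D (stage D ps j) n) S"
  shows "indep_mod (cycles E (stage E ps i) n) (boundaries E (stage E ps j) n) (lin \<phi> ` S)"
    "card (lin \<phi> ` S) = card S"
proof -
  have "{} \<in> boundaries E (stage E ps j) n"
    by (rule empty_in_boundaries)
  moreover have "\<forall>a b. finite a \<longrightarrow> finite b \<longrightarrow> lin \<phi> (sdiff a b) = sdiff (lin \<phi> a) (lin \<phi> b)"
    by (simp add: lin_sdiff)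
  moreover have "\<forall>u\<in>cycles D (stage D ps i) n. lin \<phi> u \<in> cycles E (stage E ps i) n"
    using chain_map_cycles[OF \<phi> D E ext] by blast
  moreover have "\<forall>u\<in>cycles D (stage D ps i) n.
      lin \<phi> u \<in> boundaries E (stage E ps j) n \<longrightarrow> u \<in> boundaries D (stage D ps j) n"
    using homotopy_equivalence_reflects_boundaries[OF \<phi> \<psi> htpy D E ext \<open>i \<le> j\<close>] by blast
  ultimately show "indep_mod (cycles E (stage E ps i) n) (boundaries E (stage E ps j) n) (lin \<phi> ` S)"
    "card (lin \<phi> ` S) = card S"
    by (rule indep_mod_image[where L = "lin \<phi>", OF z2_subspace_cycles _ lin_empty _ _ _ S])+
qed

lemma prank_stage_fhtpy_equivalent:
  assumes "fhtpy_equivalent le D E" and "finite (gens E)"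
    and D: "filtered_over ps D" and E: "filtered_over ps E" and ext: "linear_extension le ps"
    and "i \<le> j"
  shows "prank D (stage D ps i) (stage D ps j) n = prank E (stage E ps i) (stage E ps j) n"
proof -
  obtain \<phi> \<psi> where \<phi>: "fchain_map le D E \<phi>" and \<psi>: "fchain_map le E D \<psi>"
    and htpy_D: "fhomotopic le D D (\<lambda>g. lin \<psi> (\<phi> g)) (\<lambda>g. {g})"
    and htpy_E: "fhomotopic le E E (\<lambda>h. lin \<phi> (\<psi> h)) (\<lambda>h. {h})"
    using assms(1) by (auto simp: fhtpy_equivalent_def)
  let ?UD = "cycles D (stage D ps i) n" and ?WD = "boundaries D (stage D ps j) n"
  let ?UE = "cycles E (stage E ps i) n" and ?WE = "boundaries E (stage E ps j) n"
  note to_E = indep_mod_homotopy_equivalence_image[OF \<phi> \<psi> htpy_D D E ext \<open>i \<le> j\<close>]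
  note to_D = indep_mod_homotopy_equivalence_image[OF \<psi> \<phi> htpy_E E D ext \<open>i \<le> j\<close>]
  have "\<Union>?UE \<subseteq> gens E"
    using stage_subset_gens[of E ps i] by (auto simp: cycles_def chains_def)
  then have bound_E: "card S \<le> card (gens E)" if "indep_mod ?UE ?WE S" for S
    by (rule card_indep_mod_le_ambient[OF z2_subspace_cycles z2_subspace_boundaries_stage[OF E] that
          \<open>finite (gens E)\<close>])
  have bound_D: "card S \<le> card (gens E)" if "indep_mod ?UD ?WD S" for S
    using bound_E[OF to_E(1)[OF that]] to_E(2)[OF that] by simp
  have "qdim ?UD ?WD \<le> qdim ?UE ?WE"
    by (rule qdim_le_of_indep_transfer[OF _ bound_E]) (use to_E in blast)
  moreover have "qdim ?UE ?WE \<le> qdim ?UD ?WD"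
    by (rule qdim_le_of_indep_transfer[OF _ bound_D]) (use to_D in blast)
  ultimately show ?thesis
    by (simp add: prank_def)
qed

section \<open>Persistence diagrams of rank functions\<close>

definition interval_mult :: "(nat \<Rightarrow> nat \<Rightarrow> int) \<Rightarrow> nat \<Rightarrow> nat \<Rightarrow> int" where
  "interval_mult r a b = r a b - r (a - 1) b - r a (b + 1) + r (a - 1) (b + 1)"

definition rank_diagram :: "(nat \<Rightarrow> nat \<Rightarrow> int) \<Rightarrow> nat \<Rightarrow> (nat \<Rightarrow> ereal) \<Rightarrow> (ereal \<times> ereal) multiset"
  where
  "rank_diagram r m val = (\<Sum>(a, b)\<in>{(a, b). 1 \<le> a \<and> a \<le> b \<and> b \<le> m}.
     if val a = val (b + 1) then {#} else replicate_mset (nat (interval_mult r a b)) (val a, val (b + 1)))"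

definition rank_invariant ::
  "('g, 'p, 'z) fcc_scheme \<Rightarrow> (nat \<Rightarrow> 'g set) \<Rightarrow> nat \<Rightarrow> int \<Rightarrow> nat \<Rightarrow> nat \<Rightarrow> int" where
  "rank_invariant D filt m n i j = (if i = 0 \<or> m < j then 0 else int (prank D (filt i) (filt j) n))"

lemma pers_module_eq_rank_diagram:
  "pers_module D filt m val n = rank_diagram (rank_invariant D filt m n) m val"
  unfolding pers_module_def rank_diagram_def interval_mult_def rank_invariant_def Let_def by simp

lemma pers_module_cong:
  assumes "\<And>i j. 1 \<le> i \<Longrightarrow> i \<le> j \<Longrightarrow> j \<le> m \<Longrightarrow> prank D (filt i) (filt j) n = prank D' (filt' i) (filt' j) n"
  shows "pers_module D filt m val n = pers_module D' filt' m val n"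
proof -
  have "rank_invariant D filt m n i j = rank_invariant D' filt' m n i j" if "i \<le> j" for i j
    using assms that by (simp add: rank_invariant_def)
  then show ?thesis
    unfolding pers_module_eq_rank_diagram rank_diagram_def interval_mult_def
    by (intro sum.cong) auto
qed

lemma rank_invariant_eq_qdim:
  assumes "filt 0 = {}"
  shows "rank_invariant D filt m n i j
    = int (qdim (cycles D (filt i) n) (if j \<le> m then boundaries D (filt j) n else {c. finite c}))"
proof -
  have "cycles D (filt 0) n \<subseteq> {{}}"
    using assms by (auto simp: cycles_def chains_def)
  then have "qdim (cycles D (filt 0) n) (boundaries D (filt j) n) = 0"
    using empty_in_boundaries by (intro qdim_eq_0) blast
  moreover have "qdim (cycles D (filt i) n) {c. finite c} = 0"
    by (intro qdim_eq_0) (auto simp: cycles_def chains_def)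
  ultimately show ?thesis
    by (auto simp: rank_invariant_def prank_def)
qed

lemma interval_mult_rank_invariant_nonneg:
  assumes filt: "mono filt" "filt 0 = {}" "finite (filt m)" "\<forall>g\<in>filt m. finite (bdry D g)"
    and ab: "1 \<le> a" "a \<le> b" "b \<le> m"
  shows "0 \<le> interval_mult (rank_invariant D filt m n) a b"
proof -
  define Z where "Z i = cycles D (filt i) n" for i
  define W where "W j = (if j \<le> m then boundaries D (filt j) n else {c. finite c})" for j
  have r: "rank_invariant D filt m n i j = int (qdim (Z i) (W j))" for i j
    unfolding Z_def W_def by (rule rank_invariant_eq_qdim[where filt = filt, OF filt(2)])
  have Z: "z2_subspace (Z i)" for i
    by (simp add: Z_def z2_subspace_cycles)
  have W: "z2_subspace (W j)" for j
  proof (cases "j \<le> m")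
    case True
    then have "\<forall>g\<in>filt j. finite (bdry D g)"
      using filt(1,4) by (auto dest: monoD)
    then show ?thesis
      using True by (simp add: W_def z2_subspace_boundaries)
  qed (simp add: W_def z2_subspace_finite_sets)
  have "Z (a - 1) \<subseteq> Z a"
    using filt(1) by (simp add: Z_def cycles_mono monoD)
  moreover have "W b \<subseteq> W (b + 1)"
  proof (cases "b + 1 \<le> m")
    case True
    then show ?thesis
      using boundaries_mono[OF monoD[OF filt(1)], of b "b + 1"] by (simp add: W_def)
  next
    case False
    then show ?thesis
      using z2_subspace_finite[OF W, of _ b] by (auto simp: W_def)
  qed
  moreover have "\<Union>(Z a) \<subseteq> filt m"
    using monoD[OF filt(1), of a m] ab by (auto simp: Z_def cycles_def chains_def)
  ultimately have "qdim (Z (a - 1)) (W b) + qdim (Z a) (W (b + 1))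
      \<le> qdim (Z a) (W b) + qdim (Z (a - 1)) (W (b + 1))"
    using qdim_rectangle_ineq Z W filt(3) by blast
  then show ?thesis
    unfolding interval_mult_def r by linarith
qed

lemma threshold_index:
  fixes val :: "nat \<Rightarrow> 'a::linorder"
  assumes mono: "mono_on {1..N} val"
    and down: "\<And>u v. v \<le> u \<Longrightarrow> Q u \<Longrightarrow> Q v"
  obtains k where "{a \<in> {1..N}. Q (val a)} = {1..k}" "k = 0 \<or> k = N \<or> val k < val (Suc k)"
proof -
  define k where "k = Max (insert 0 {a \<in> {1..N}. Q (val a)})"
  have fin: "finite (insert 0 {a \<in> {1..N}. Q (val a)})"
    by simp
  have k: "k \<in> insert 0 {a \<in> {1..N}. Q (val a)}" "\<And>a. a \<in> {a \<in> {1..N}. Q (val a)} \<Longrightarrow> a \<le> k"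
    unfolding k_def using Max_in[OF fin] Max_ge[OF fin] by auto
  have k_pos: "k \<le> N" "0 < k \<Longrightarrow> Q (val k)"
    using k(1) by auto
  have "Q (val a)" if a: "1 \<le> a" "a \<le> k" for a
    using down[OF mono_onD[OF mono, of a k]] k_pos a by simp
  then have level: "{a \<in> {1..N}. Q (val a)} = {1..k}"
    using k(2) k_pos(1) by fastforce
  have "val k < val (Suc k)" if "k \<noteq> 0" "k \<noteq> N"
  proof (rule ccontr)
    assume "\<not> val k < val (Suc k)"
    then have "Q (val (Suc k))"
      using down[where u = "val k" and v = "val (Suc k)"] k_pos(2) that by simp
    moreover have "Suc k \<le> N"
      using k_pos(1) that by simp
    ultimately show False
      using k(2)[of "Suc k"] by simp
  qed
  then have "k = 0 \<or> k = N \<or> val k < val (Suc k)"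
    by blast
  with level show ?thesis
    by (rule that)
qed

lemma initial_segment_iff:
  fixes N k :: nat
  assumes "{a \<in> {1..N}. Q a} = {1..k}" "1 \<le> a" "a \<le> N"
  shows "Q a \<longleftrightarrow> a \<le> k"
  using assms(2,3) assms(1)[unfolded set_eq_iff, rule_format, of a] by simp

lemma initial_segment_le:
  fixes N k :: nat
  assumes "{a \<in> {1..N}. Q a} = {1..k}"
  shows "k \<le> N"
  using assms[unfolded set_eq_iff, rule_format, of k] by (cases "k = 0") auto

lemma initial_segment_mono:
  fixes N k k' :: nat
  assumes "{a \<in> {1..N}. Q a} = {1..k}" "{a \<in> {1..N}. Q' a} = {1..k'}" "\<And>a. Q a \<Longrightarrow> Q' a"
  shows "k \<le> k'"
proof (cases "k = 0")
  case False
  then show ?thesis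
    using initial_segment_iff[OF assms(1), of k] initial_segment_iff[OF assms(2), of k]
      initial_segment_le[OF assms(1)] assms(3) by simp
qed simp

lemma level_pairs_eq_rectangle:
  fixes val :: "nat \<Rightarrow> 'a::linorder"
  assumes mono: "mono_on {1..m + 1} val" and "x < y"
    and lx: "{a \<in> {1..m + 1}. val a < x} = {1..lx}" and hx: "{a \<in> {1..m + 1}. val a \<le> x} = {1..hx}"
    and ly: "{a \<in> {1..m + 1}. val a < y} = {1..ly}" and hy: "{a \<in> {1..m + 1}. val a \<le> y} = {1..hy}"
  shows "{(a, b). 1 \<le> a \<and> a \<le> b \<and> b \<le> m \<and> val a = x \<and> val (Suc b) = y} = {Suc lx..hx} \<times> {ly..<hy}"
    (is "?pairs = _")
proof (intro set_eqI iffI)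
  fix p
  assume "p \<in> ?pairs"
  then obtain a b where p: "p = (a, b)" "1 \<le> a" "a \<le> b" "b \<le> m" "val a = x" "val (Suc b) = y"
    by blast
  then have "lx < a" "a \<le> hx" "ly \<le> b" "Suc b \<le> hy"
    using initial_segment_iff[OF lx, of a] initial_segment_iff[OF hx, of a]
      initial_segment_iff[OF ly, of "Suc b"] initial_segment_iff[OF hy, of "Suc b"] by auto
  then show "p \<in> {Suc lx..hx} \<times> {ly..<hy}"
    using p(1) by simp
next
  fix p
  assume "p \<in> {Suc lx..hx} \<times> {ly..<hy}"
  then obtain a b where p: "p = (a, b)" "lx < a" "a \<le> hx" "ly \<le> b" "Suc b \<le> hy"
    by auto
  have bounds: "a \<le> m + 1" "Suc b \<le> m + 1"
    using p initial_segment_le[OF hx] initial_segment_le[OF hy] by simp_all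
  then have vals: "val a = x" "val (Suc b) = y"
    using p initial_segment_iff[OF lx, of a] initial_segment_iff[OF hx, of a]
      initial_segment_iff[OF ly, of "Suc b"] initial_segment_iff[OF hy, of "Suc b"] by auto
  have "a \<le> b"
  proof (rule ccontr)
    assume "\<not> a \<le> b"
    then have "val (Suc b) \<le> val a"
      using mono_onD[OF mono, of "Suc b" a] bounds by simp
    then show False
      using vals \<open>x < y\<close> by simp
  qed
  then show "p \<in> ?pairs"
    using p(1,2) vals bounds by simp
qed

lemma count_rank_diagram:
  "count (rank_diagram r m val) (x, y) = (if x = y then 0 else
     \<Sum>(a, b)\<in>{(a, b). 1 \<le> a \<and> a \<le> b \<and> b \<le> m \<and> val a = x \<and> val (Suc b) = y}. nat (interval_mult r a b))"
proof -
  define I where "I = {(a, b). 1 \<le> a \<and> a \<le> b \<and> b \<le> m}"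
  define P where "P p \<longleftrightarrow> val (fst p) = x \<and> val (Suc (snd p)) = y" for p
  have "finite I"
    unfolding I_def by (rule finite_subset[of _ "{..m} \<times> {..m}"]) auto
  have "count (rank_diagram r m val) (x, y)
      = (\<Sum>p\<in>I. if x \<noteq> y \<and> P p then nat (interval_mult r (fst p) (snd p)) else 0)"
    unfolding rank_diagram_def count_sum I_def P_def by (intro sum.cong refl) (auto split: prod.splits)
  also have "\<dots> = (if x = y then 0 else \<Sum>p\<in>{p \<in> I. P p}. nat (interval_mult r (fst p) (snd p)))"
    using \<open>finite I\<close> by (simp add: sum.inter_filter)
  also have "{p \<in> I. P p} = {(a, b). 1 \<le> a \<and> a \<le> b \<and> b \<le> m \<and> val a = x \<and> val (Suc b) = y}"
    by (auto simp: I_def P_def)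
  finally show ?thesis
    by (simp add: case_prod_beta')
qed

lemma sum_interval_mult_rectangle:
  assumes "l \<le> h" "l' \<le> h'"
  shows "(\<Sum>(a, b)\<in>{Suc l..h} \<times> {l'..<h'}. interval_mult r a b) = r h l' - r h h' - r l l' + r l h'"
proof -
  have inner: "(\<Sum>b = l'..<h'. interval_mult r a b) = (r a l' - r a h') - (r (a - 1) l' - r (a - 1) h')"
    for a
    using sum_Suc_diff'[OF assms(2), of "\<lambda>b. r (a - 1) b - r a b"]
    by (simp add: interval_mult_def algebra_simps)
  have "(\<Sum>(a, b)\<in>{Suc l..h} \<times> {l'..<h'}. interval_mult r a b)
      = (\<Sum>a = Suc l..h. \<Sum>b = l'..<h'. interval_mult r a b)"
    by (rule sum.cartesian_product[symmetric])
  also have "\<dots> = (\<Sum>a = Suc l..h. (r a l' - r a h') - (r (a - 1) l' - r (a - 1) h'))"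
    by (simp only: inner)
  also have "\<dots> = r h l' - r h h' - r l l' + r l h'"
    using sum_telescope''[OF assms(1), of "\<lambda>a. r a l' - r a h'"] by simp
  finally show ?thesis .
qed

lemma int_count_rank_diagram:
  assumes mono: "mono_on {1..m + 1} val"
    and nonneg: "\<And>a b. 1 \<le> a \<Longrightarrow> a \<le> b \<Longrightarrow> b \<le> m \<Longrightarrow> 0 \<le> interval_mult r a b"
    and "x < y"
    and lx: "{a \<in> {1..m + 1}. val a < x} = {1..lx}" and hx: "{a \<in> {1..m + 1}. val a \<le> x} = {1..hx}"
    and ly: "{a \<in> {1..m + 1}. val a < y} = {1..ly}" and hy: "{a \<in> {1..m + 1}. val a \<le> y} = {1..hy}"
  shows "int (count (rank_diagram r m val) (x, y)) = r hx ly - r hx hy - r lx ly + r lx hy"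
proof -
  note pairs = level_pairs_eq_rectangle[OF mono \<open>x < y\<close> lx hx ly hy]
  have "lx \<le> hx" "ly \<le> hy"
    by (rule initial_segment_mono[OF lx hx], simp, rule initial_segment_mono[OF ly hy], simp)
  have "count (rank_diagram r m val) (x, y) = (\<Sum>(a, b)\<in>{Suc lx..hx} \<times> {ly..<hy}. nat (interval_mult r a b))"
    using count_rank_diagram[of r m val x y] pairs \<open>x < y\<close> by simp
  moreover have "int (\<Sum>(a, b)\<in>{Suc lx..hx} \<times> {ly..<hy}. nat (interval_mult r a b))
      = (\<Sum>(a, b)\<in>{Suc lx..hx} \<times> {ly..<hy}. interval_mult r a b)"
    unfolding of_nat_sum by (intro sum.cong refl) (use nonneg in \<open>auto simp: pairs[symmetric]\<close>)
  ultimately have "int (count (rank_diagram r m val) (x, y))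
      = (\<Sum>(a, b)\<in>{Suc lx..hx} \<times> {ly..<hy}. interval_mult r a b)"
    by simp
  also have "\<dots> = r hx ly - r hx hy - r lx ly + r lx hy"
    by (rule sum_interval_mult_rectangle[OF \<open>lx \<le> hx\<close> \<open>ly \<le> hy\<close>])
  finally show ?thesis .
qed

lemma count_rank_diagram_not_less:
  fixes val :: "nat \<Rightarrow> ereal"
  assumes mono: "mono_on {1..m + 1} val" and "\<not> x < y"
  shows "count (rank_diagram r m val) (x, y) = 0"
proof (cases "x = y")
  case False
  have "x \<le> y" if "1 \<le> a" "a \<le> b" "b \<le> m" "val a = x" "val (Suc b) = y" for a b
    using mono_onD[OF mono, of a "Suc b"] that by simp
  then have empty: "{(a, b). 1 \<le> a \<and> a \<le> b \<and> b \<le> m \<and> val a = x \<and> val (Suc b) = y} = {}"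
    using False assms(2) by fastforce
  show ?thesis
    unfolding count_rank_diagram empty using False by simp
qed (simp add: count_rank_diagram)

lemma level_thresholds:
  fixes val :: "nat \<Rightarrow> ereal"
  assumes mono: "mono_on {1..m + 1} val"
    and top: "val (m + 1) = \<infinity>" and "x < y"
  obtains lx hx ly hy where
    "{a \<in> {1..m + 1}. val a < x} = {1..lx}" "{a \<in> {1..m + 1}. val a \<le> x} = {1..hx}"
    "{a \<in> {1..m + 1}. val a < y} = {1..ly}" "{a \<in> {1..m + 1}. val a \<le> y} = {1..hy}"
    "lx \<le> hx" "hx \<le> ly" "ly \<le> hy"
    "lx = 0 \<or> val lx < val (Suc lx)" "hx = 0 \<or> val hx < val (Suc hx)"
    "ly = 0 \<or> m < ly \<or> val ly < val (Suc ly)" "hy = 0 \<or> m < hy \<or> val hy < val (Suc hy)"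
proof -
  have thresholds: "\<exists>k. {a \<in> {1..m + 1}. Q (val a)} = {1..k} \<and> (k = 0 \<or> k = m + 1 \<or> val k < val (Suc k))"
    if down: "\<And>u v. v \<le> u \<Longrightarrow> Q u \<Longrightarrow> Q v" for Q
    by (rule threshold_index[OF mono, where Q = Q]) (blast intro: down)+
  obtain lx where lx: "{a \<in> {1..m + 1}. val a < x} = {1..lx}" "lx = 0 \<or> lx = m + 1 \<or> val lx < val (Suc lx)"
    using thresholds[of "\<lambda>u. u < x"] le_less_trans by blast
  obtain hx where hx: "{a \<in> {1..m + 1}. val a \<le> x} = {1..hx}" "hx = 0 \<or> hx = m + 1 \<or> val hx < val (Suc hx)"
    using thresholds[of "\<lambda>u. u \<le> x"] order_trans by blast
  obtain ly where ly: "{a \<in> {1..m + 1}. val a < y} = {1..ly}" "ly = 0 \<or> ly = m + 1 \<or> val ly < val (Suc ly)"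
    using thresholds[of "\<lambda>u. u < y"] le_less_trans by blast
  obtain hy where hy: "{a \<in> {1..m + 1}. val a \<le> y} = {1..hy}" "hy = 0 \<or> hy = m + 1 \<or> val hy < val (Suc hy)"
    using thresholds[of "\<lambda>u. u \<le> y"] order_trans by blast
  have order: "lx \<le> hx" "hx \<le> ly" "ly \<le> hy"
    using initial_segment_mono[OF lx(1) hx(1)] initial_segment_mono[OF hx(1) ly(1)]
      initial_segment_mono[OF ly(1) hy(1)] \<open>x < y\<close> by force+
  have "hx \<noteq> m + 1"
  proof
    assume "hx = m + 1"
    then have "val (m + 1) \<le> x"
      using initial_segment_iff[OF hx(1), of "m + 1"] by simp
    then show False
      using top \<open>x < y\<close> by simp
  qed
  then have "hx \<le> m"
    using initial_segment_le[OF hx(1)] by simp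
  then show ?thesis
    using that lx hx ly hy order by force
qed

lemma rank_diagram_eq_at_jumps:
  fixes val :: "nat \<Rightarrow> ereal"
  assumes mono: "mono_on {1..m + 1} val"
    and top: "val (m + 1) = \<infinity>"
    and nonneg: "\<And>a b. 1 \<le> a \<Longrightarrow> a \<le> b \<Longrightarrow> b \<le> m \<Longrightarrow> 0 \<le> interval_mult r a b"
    and nonneg': "\<And>a b. 1 \<le> a \<Longrightarrow> a \<le> b \<Longrightarrow> b \<le> m \<Longrightarrow> 0 \<le> interval_mult r' a b"
    and eq: "\<And>i j. i \<le> j \<Longrightarrow> i = 0 \<or> val i < val (Suc i) \<Longrightarrow> j = 0 \<or> m < j \<or> val j < val (Suc j) \<Longrightarrow>
      r i j = r' i j"
  shows "rank_diagram r m val = rank_diagram r' m val"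
proof (rule multiset_eqI)
  fix p :: "ereal \<times> ereal"
  obtain x y where p: "p = (x, y)"
    by fastforce
  show "count (rank_diagram r m val) p = count (rank_diagram r' m val) p"
  proof (cases "x < y")
    case False
    then show ?thesis
      using count_rank_diagram_not_less[OF mono] p by simp
  next
    case True
    obtain lx hx ly hy where levels:
      "{a \<in> {1..m + 1}. val a < x} = {1..lx}" "{a \<in> {1..m + 1}. val a \<le> x} = {1..hx}"
      "{a \<in> {1..m + 1}. val a < y} = {1..ly}" "{a \<in> {1..m + 1}. val a \<le> y} = {1..hy}"
      and order: "lx \<le> hx" "hx \<le> ly" "ly \<le> hy"
      and jumps: "lx = 0 \<or> val lx < val (Suc lx)" "hx = 0 \<or> val hx < val (Suc hx)"
        "ly = 0 \<or> m < ly \<or> val ly < val (Suc ly)" "hy = 0 \<or> m < hy \<or> val hy < val (Suc hy)"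
      by (rule level_thresholds[OF mono top True])
    have "int (count (rank_diagram r m val) (x, y)) = int (count (rank_diagram r' m val) (x, y))"
      using int_count_rank_diagram[OF mono nonneg True levels]
        int_count_rank_diagram[OF mono nonneg' True levels]
        eq[OF order(2) jumps(2,3)] eq[OF order(2)[THEN order_trans, OF order(3)] jumps(2,4)]
        eq[OF order(1)[THEN order_trans, OF order(2)] jumps(1,3)]
        eq[OF order(1)[THEN order_trans, OF order(2)[THEN order_trans, OF order(3)]] jumps(1,4)]
      by simp
    then show ?thesis
      using p by simp
  qed
qed

section \<open>Conley complexes and compatible orders\<close>

lemma morse_decompositionD:
  assumes "morse_decomposition K \<V> P le M"
  shows "\<And>p. p \<in> P \<Longrightarrow> M p \<subseteq> K"
    and "\<And>p q \<sigma>. p \<in> P \<Longrightarrow> q \<in> P \<Longrightarrow> \<sigma> \<in> M p \<Longrightarrow> \<sigma> \<in> M q \<Longrightarrow> p = q"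
    and "\<And>\<sigma>. \<sigma> \<in> K \<Longrightarrow> \<exists>p\<in>P. \<sigma> \<in> M p"
  using assms unfolding morse_decomposition_def by blast+

lemma grd_morse_cc:
  assumes md: "morse_decomposition K \<V> P le M" and "p \<in> P" "\<sigma> \<in> M p"
  shows "grd (morse_cc K P M) \<sigma> = p"
proof -
  have "(THE q. q \<in> P \<and> \<sigma> \<in> M q) = p"
    by (rule the_equality) (use assms(2,3) morse_decompositionD(2)[OF md] in blast)+
  then show ?thesis
    by (simp add: morse_cc_def)
qed

lemma morse_decomposition_cover:
  assumes md: "morse_decomposition K \<V> P le M" and "\<sigma> \<in> K"
  obtains p where "p \<in> P" "\<sigma> \<in> M p" "grd (morse_cc K P M) \<sigma> = p"
proof -
  obtain p where "p \<in> P" "\<sigma> \<in> M p"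
    using morse_decompositionD(3)[OF md \<open>\<sigma> \<in> K\<close>] by blast
  then show ?thesis
    using that grd_morse_cc[OF md] by blast
qed

lemma stage_morse_cc:
  assumes md: "morse_decomposition K \<V> P le M" and "set ps = P"
  shows "stage (morse_cc K P M) ps i = \<Union>(M ` set (take i ps))"
proof (intro set_eqI iffI)
  fix \<sigma>
  assume "\<sigma> \<in> stage (morse_cc K P M) ps i"
  then have \<sigma>: "\<sigma> \<in> K" "grd (morse_cc K P M) \<sigma> \<in> set (take i ps)"
    by (simp_all add: stage_def morse_cc_def)
  obtain p where "\<sigma> \<in> M p" "grd (morse_cc K P M) \<sigma> = p"
    by (rule morse_decomposition_cover[OF md \<sigma>(1)])
  then show "\<sigma> \<in> \<Union>(M ` set (take i ps))"
    using \<sigma>(2) by auto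
next
  fix \<sigma>
  assume "\<sigma> \<in> \<Union>(M ` set (take i ps))"
  then obtain p where p: "p \<in> set (take i ps)" "\<sigma> \<in> M p"
    by blast
  then have "p \<in> P"
    using in_set_takeD[OF p(1)] \<open>set ps = P\<close> by simp
  then have "\<sigma> \<in> K" "grd (morse_cc K P M) \<sigma> = p"
    using morse_decompositionD(1)[OF md] grd_morse_cc[OF md] p(2) by auto
  then show "\<sigma> \<in> stage (morse_cc K P M) ps i"
    using p(1) by (simp add: stage_def morse_cc_def)
qed

lemma filtered_over_morse_cc:
  assumes "finite K" "morse_decomposition K \<V> P le M" "set ps = P"
  shows "filtered_over ps (morse_cc K P M)"
  unfolding filtered_over_def
proof
  fix \<sigma>
  assume "\<sigma> \<in> gens (morse_cc K P M)"
  then have "\<sigma> \<in> K"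
    by (simp add: morse_cc_def)
  then obtain p where "p \<in> P" "grd (morse_cc K P M) \<sigma> = p"
    by (rule morse_decomposition_cover[OF assms(2)])
  then show "finite (bdry (morse_cc K P M) \<sigma>) \<and> grd (morse_cc K P M) \<sigma> \<in> set ps"
    using assms(1,3) by (simp add: morse_cc_def)
qed

lemma filtered_over_conley_complex:
  "conley_complex P le C D \<Longrightarrow> set ps = P \<Longrightarrow> filtered_over ps D"
  by (simp add: conley_complex_def is_fcc_def filtered_over_def)

lemma prank_morse_cc_eq_simplicial_cc: "prank (morse_cc K P M) A B n = prank (simplicial_cc K) A B n"
  by (simp add: prank_def cycles_def boundaries_def chains_def morse_cc_def simplicial_cc_def)

lemma compatible_order_linear_extension: "compatible_order P le fP ps \<Longrightarrow> linear_extension le ps"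
  by (simp add: compatible_order_def linear_extension_def)

lemma compatible_orders_same_values:
  assumes "compatible_order P le fP ps" "compatible_order P le fP ps'"
  shows "map fP ps = map fP ps'"
proof -
  have "mset ps = mset ps'"
    using assms set_eq_iff_mset_eq_distinct by (metis compatible_order_def)
  then have "mset (map fP ps) = mset (map fP ps')"
    by simp
  then have "sort (map fP ps') = map fP ps"
    using assms(1) by (intro properties_for_sort) (simp_all add: compatible_order_def)
  moreover have "sort (map fP ps') = map fP ps'"
    using assms(2) by (simp add: compatible_order_def sorted_sort_id)
  ultimately show ?thesis
    by simp
qed

lemma order_val_mono:
  assumes "sorted (map fP ps)"
  shows "mono_on {1..} (order_val fP ps)"
proof (rule mono_onI)
  fix i j :: nat
  assume "i \<in> {1..}" "j \<in> {1..}" "i \<le> j"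
  then show "order_val fP ps i \<le> order_val fP ps j"
    using sorted_nth_mono[OF assms, of "i - 1" "j - 1"] by (auto simp: order_val_def)
qed

lemma set_take_eq_sublevel:
  assumes sorted: "sorted (map fP ps)" and jump: "order_val fP ps i < order_val fP ps (Suc i)"
  shows "set (take i ps) = {p \<in> set ps. ereal (fP p) < order_val fP ps (Suc i)}"
proof -
  have mono: "order_val fP ps a \<le> order_val fP ps b" if "1 \<le> a" "a \<le> b" for a b
    using mono_onD[OF order_val_mono[OF sorted]] that by simp
  have i: "1 \<le> i" "i \<le> length ps"
    using jump by (auto simp: order_val_def split: if_splits)
  have val_nth: "order_val fP ps (Suc k) = ereal (fP (ps ! k))" if "k < length ps" for k
    using that by (simp add: order_val_def)
  show ?thesis
  proof (intro set_eqI iffI)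
    fix p
    assume "p \<in> set (take i ps)"
    then obtain k where k: "k < i" "k < length ps" "p = ps ! k"
      by (auto simp: in_set_conv_nth)
    then show "p \<in> {p \<in> set ps. ereal (fP p) < order_val fP ps (Suc i)}"
      using mono[of "Suc k" i] val_nth[of k] jump by auto
  next
    fix p
    assume p: "p \<in> {p \<in> set ps. ereal (fP p) < order_val fP ps (Suc i)}"
    then obtain k where k: "k < length ps" "p = ps ! k"
      by (auto simp: in_set_conv_nth)
    have "k < i"
      using mono[of "Suc i" "Suc k"] val_nth[of k] k p by (cases "k < i") auto
    then show "p \<in> set (take i ps)"
      using k by (auto simp: in_set_conv_nth)
  qed
qed

lemma UN_nth_eq_UN_set_take:
  "i \<le> length ps \<Longrightarrow> (\<Union>j<i. M (ps ! j)) = \<Union>(M ` set (take i ps))"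
  by (simp add: nth_image[symmetric] image_image atLeast0LessThan)

lemma order_val_cong_map:
  assumes "map fP ps = map fP ps'"
  shows "order_val fP ps = order_val fP ps'"
proof
  fix k
  have len: "length ps = length ps'"
    using assms by (metis length_map)
  have "fP (ps ! (k - 1)) = fP (ps' ! (k - 1))" if "1 \<le> k" "k \<le> length ps"
    using arg_cong[OF assms, of "\<lambda>xs. xs ! (k - 1)"] that len by simp
  then show "order_val fP ps k = order_val fP ps' k"
    using len by (simp add: order_val_def)
qed

lemma UN_nth_eq_at_jump:
  assumes co: "compatible_order P le fP ps" and co': "compatible_order P le fP ps'"
    and jump: "order_val fP ps i < order_val fP ps (Suc i)"
  shows "(\<Union>j<i. M (ps ! j)) = (\<Union>j<i. M (ps' ! j))"
proof -
  have map_eq: "map fP ps = map fP ps'"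
    by (rule compatible_orders_same_values[OF co co'])
  then have len: "length ps' = length ps"
    by (metis length_map)
  have "order_val fP ps' = order_val fP ps"
    using order_val_cong_map[OF map_eq] by simp
  moreover have "set ps' = set ps" "sorted (map fP ps)"
    using co co' by (simp_all add: compatible_order_def)
  moreover have "i \<le> length ps"
    using jump by (auto simp: order_val_def split: if_splits)
  ultimately show ?thesis
    using set_take_eq_sublevel[of fP ps i] set_take_eq_sublevel[of fP ps' i] map_eq jump len
    by (simp add: UN_nth_eq_UN_set_take)
qed

lemma pers_filtered_eq_pers_module_stage:
  "pers_filtered D fP ps = pers_module D (stage D ps) (length ps) (order_val fP ps)"
  by (simp add: pers_filtered_def stage_def[abs_def])

lemma pers_filtered_conley_complex_eq_pers_F:
  assumes K: "finite K" and md: "morse_decomposition K \<V> P le M" and co: "compatible_order P le fP ps"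
    and cc: "conley_complex P le (morse_cc K P M) Cb"
  shows "pers_filtered Cb fP ps = pers_F K M fP ps"
proof
  fix n
  let ?C = "morse_cc K P M"
  have ps: "set ps = P" "linear_extension le ps"
    using co compatible_order_linear_extension by (auto simp: compatible_order_def)
  have "prank Cb (stage Cb ps i) (stage Cb ps j) n
      = prank (simplicial_cc K) (\<Union>k<i. M (ps ! k)) (\<Union>k<j. M (ps ! k)) n"
    if "i \<le> j" "j \<le> length ps" for i j
  proof -
    have "fhtpy_equivalent le Cb ?C" "finite (gens ?C)"
      using cc K by (simp_all add: conley_complex_def morse_cc_def)
    then have "prank Cb (stage Cb ps i) (stage Cb ps j) n = prank ?C (stage ?C ps i) (stage ?C ps j) n"
      by (rule prank_stage_fhtpy_equivalent[OF _ _ filtered_over_conley_complex[OF cc ps(1)]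
            filtered_over_morse_cc[OF K md ps(1)] ps(2) \<open>i \<le> j\<close>])
    also have "\<dots> = prank (simplicial_cc K) (\<Union>(M ` set (take i ps))) (\<Union>(M ` set (take j ps))) n"
      by (simp add: prank_morse_cc_eq_simplicial_cc stage_morse_cc[OF md ps(1)])
    also have "\<dots> = prank (simplicial_cc K) (\<Union>k<i. M (ps ! k)) (\<Union>k<j. M (ps ! k)) n"
      using that by (simp add: UN_nth_eq_UN_set_take)
    finally show ?thesis .
  qed
  then show "pers_filtered Cb fP ps n = pers_F K M fP ps n"
    unfolding pers_filtered_eq_pers_module_stage pers_F_def by (intro pers_module_cong) simp
qed

lemma interval_mult_pers_F_nonneg:
  assumes K: "finite K" and md: "morse_decomposition K \<V> P le M" and "set ps = P"
    and "1 \<le> a" "a \<le> b" "b \<le> length ps"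
  shows "0 \<le> interval_mult (rank_invariant (simplicial_cc K) (\<lambda>i. \<Union>j<i. M (ps ! j)) (length ps) n) a b"
proof (rule interval_mult_rank_invariant_nonneg)
  show "mono (\<lambda>i. \<Union>j<i. M (ps ! j))"
    by (rule monoI) (metis UN_mono lessThan_subset_iff order.refl)
  have "(\<Union>j<length ps. M (ps ! j)) \<subseteq> K"
    using morse_decompositionD(1)[OF md] \<open>set ps = P\<close> nth_mem by blast
  then show "finite (\<Union>j<length ps. M (ps ! j))"
    using K finite_subset by blast
  show "\<forall>g\<in>\<Union>j<length ps. M (ps ! j). finite (bdry (simplicial_cc K) g)"
    using K by (simp add: simplicial_cc_def)
qed (use assms in simp_all)

lemma pers_F_compatible_orders_eq:
  assumes K: "finite K" and md: "morse_decomposition K \<V> P le M"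
    and co: "compatible_order P le fP ps" and co': "compatible_order P le fP ps'"
  shows "pers_F K M fP ps = pers_F K M fP ps'"
proof
  fix n
  define m where "m = length ps"
  define val where "val = order_val fP ps"
  define r where "r qs = rank_invariant (simplicial_cc K) (\<lambda>i. \<Union>j<i. M (qs ! j)) m n" for qs
  have map_eq: "map fP ps = map fP ps'"
    by (rule compatible_orders_same_values[OF co co'])
  then have len: "length ps' = m"
    unfolding m_def by (metis length_map)
  have val': "order_val fP ps' = val"
    unfolding val_def using order_val_cong_map[OF map_eq] by simp
  have "rank_diagram (r ps) m val = rank_diagram (r ps') m val"
  proof (rule rank_diagram_eq_at_jumps)
    have "sorted (map fP ps)"
      using co by (simp add: compatible_order_def)
    then show "mono_on {1..m + 1} val"
      unfolding val_def by (rule mono_on_subset[OF order_val_mono]) auto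
    show "val (m + 1) = \<infinity>"
      by (simp add: val_def order_val_def m_def)
    show "0 \<le> interval_mult (r ps) a b" "0 \<le> interval_mult (r ps') a b"
      if "1 \<le> a" "a \<le> b" "b \<le> m" for a b
      using interval_mult_pers_F_nonneg[OF K md, of ps a b n] interval_mult_pers_F_nonneg[OF K md, of ps' a b n]
        co co' that len by (simp_all add: r_def m_def compatible_order_def)
    show "r ps i j = r ps' i j"
      if "i \<le> j" "i = 0 \<or> val i < val (Suc i)" "j = 0 \<or> m < j \<or> val j < val (Suc j)" for i j
      using that UN_nth_eq_at_jump[OF co co', of _ M] by (auto simp: r_def rank_invariant_def val_def)
  qed
  then show "pers_F K M fP ps n = pers_F K M fP ps' n"
    by (simp add: pers_F_def pers_module_eq_rank_diagram r_def m_def val_def len val')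
qed

theorem theorem4:
  fixes K :: "'v set set" and \<V> :: "'v set set set"
    and P :: "'p set" and le :: "'p \<Rightarrow> 'p \<Rightarrow> bool" and M :: "'p \<Rightarrow> 'v set set"
    and f :: "'v set \<Rightarrow> real" and fP :: "'p \<Rightarrow> real"
    and ps ps' :: "'p list"
    and Cb :: "('g, 'p) fcc" and Cb' :: "('h, 'p) fcc"
  assumes "simplicial_complex K"
    and "multivector_field K \<V>"
    and "morse_decomposition K \<V> P le M"
    and "lyapunov P le M f fP"
    and "compatible_order P le fP ps"
    and "compatible_order P le fP ps'"
    and "conley_complex P le (morse_cc K P M) Cb"
    and "conley_complex P le (morse_cc K P M) Cb'"
  shows "pers_filtered Cb fP ps = pers_F K M fP ps \<and>
         pers_F K M fP ps = pers_F K M fP ps' \<and>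
         pers_F K M fP ps' = pers_filtered Cb' fP ps'"
proof -
  have K: "finite K"
    using assms(1) by (simp add: simplicial_complex_def)
  show ?thesis
    using pers_filtered_conley_complex_eq_pers_F[OF K assms(3,5,7)]
      pers_F_compatible_orders_eq[OF K assms(3,5,6)]
      pers_filtered_conley_complex_eq_pers_F[OF K assms(3,6,8)]
    by simp
qed

end
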